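(* Let $N\ge3$ and consider the complete-graph ensemble ($z=N-1$) of spring networks on the circle described in the context. For every spring $e$ and every $\bar\ell\in(-1/2,1/2)$, $$\mathbb E(\Delta l_e\mid\bar l_e=\bar\ell)=\frac{N-2}{N}\bar\ell-\bar\ell=-\frac{2\bar\ell}{N},\qquad \operatorname{Var}(\Delta l_e\mid\bar l_e=\bar\ell)=\frac{N-2}{N^2}\big(|\bar\ell|-\bar\ell^2\big).$$ In particular the edge-averaged conditional variance $\operatorname{Var}(\Delta l\mid\bar l=\bar\ell)$ equals $\frac{N-2}{N^2}(|\bar\ell|-\bar\ell^2)$.
   Context: Let the circle be $\mathbb R/\mathbb Z$. Node positions $x_1,\dots,x_N$ are i.i.d. uniform on $\mathbb R/\mathbb Z$ and every pair of nodes is joined by exactly one spring ($N(N-1)/2$ springs, average degree $z=N-1$). A spring joining nodes $a<b$ is oriented from $a$ to $b$ with initial signed length $\bar l_e\in[-1/2,1/2)$, the representative of $x_b-x_a$ mod $1$ in $[-1/2,1/2)$; each is uniform on $[-1/2,1/2)$. With $\mathbf C$ a signed cycle matrix (fundamental cycles of a spanning tree, arbitrarily oriented; entries $\pm1$ for edges on a cycle with agreeing/opposite orientation, $0$ otherwise), the relaxed lengths are $\boldsymbol l^*=\mathbf C^T(\mathbf C\mathbf C^T)^{-1}\mathbf C\bar{\boldsymbol l}$, the minimizer of $\tfrac12\boldsymbol l^T\boldsymbol l$ subject to preserving all winding numbers $\mathbf C\boldsymbol l=\mathbf C\bar{\boldsymbol l}\in\mathbb Z^m$, and $\Delta\boldsymbol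 l=\boldsymbol l^*-\bar{\boldsymbol l}$. The edge-averaged conditional variance is $\operatorname{Var}(\Delta l_I\mid\bar l_I=\bar\ell)$ with $I$ uniform on the springs, independent of everything else. *)

theory Defs
  imports "HOL-Probability.Probability" "Jordan_Normal_Form.Gauss_Jordan_Elimination"
begin

text \<open>Enumeration of the springs: spring number k is edges N ! k, a pair (a,b) with a < b < N,
  oriented from a to b.\<close>
definition edges :: "nat \<Rightarrow> (nat \<times> nat) list" where
  "edges N = [(a, b). b \<leftarrow> [0..<N], a \<leftarrow> [0..<b]]"

definition nE :: "nat \<Rightarrow> nat" where
  "nE N = length (edges N)"

text \<open>A cycle in the complete graph on N nodes is given by a list of at least three distinct nodes,
  traversed cyclically (the traversal direction fixes its orientation).\<close>
definition is_cycle :: "nat \<Rightarrow> nat list \<Rightarrow> bool" where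
  "is_cycle N vs \<longleftrightarrow> distinct vs \<and> length vs \<ge> 3 \<and> set vs \<subseteq> {0..<N}"

definition cyc_sign :: "nat \<Rightarrow> nat list \<Rightarrow> nat \<Rightarrow> real" where
  "cyc_sign N vs k =
     (if \<exists>i<length vs. (vs ! i, vs ! ((i + 1) mod length vs)) = edges N ! k then 1
      else if \<exists>i<length vs. (vs ! ((i + 1) mod length vs), vs ! i) = edges N ! k then -1
      else 0)"

definition cyc_edges :: "nat \<Rightarrow> nat list \<Rightarrow> nat set" where
  "cyc_edges N vs = {k. k < nE N \<and> cyc_sign N vs k \<noteq> 0}"

definition tree_adj :: "nat \<Rightarrow> nat set \<Rightarrow> nat \<Rightarrow> nat \<Rightarrow> bool" where
  "tree_adj N T u v \<longleftrightarrow> (\<exists>k\<in>T. edges N ! k = (u, v) \<or> edges N ! k = (v, u))"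

definition spanning_tree :: "nat \<Rightarrow> nat set \<Rightarrow> bool" where
  "spanning_tree N T \<longleftrightarrow> T \<subseteq> {0..<nE N}
     \<and> (\<forall>u<N. \<forall>v<N. (tree_adj N T)\<^sup>*\<^sup>* u v)
     \<and> \<not> (\<exists>vs. is_cycle N vs \<and> cyc_edges N vs \<subseteq> T)"

text \<open>cyc assigns to every non-tree spring j its fundamental cycle (the cycle in T plus j),
  with an arbitrary orientation (encoded by the traversal direction of the node list).\<close>
definition fundamental_cycles :: "nat \<Rightarrow> nat set \<Rightarrow> (nat \<Rightarrow> nat list) \<Rightarrow> bool" where
  "fundamental_cycles N T cyc \<longleftrightarrow>
     (\<forall>j\<in>{0..<nE N} - T. is_cycle N (cyc j) \<and> j \<in> cyc_edges N (cyc j)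
                         \<and> cyc_edges N (cyc j) \<subseteq> T \<union> {j})"

definition nontree :: "nat \<Rightarrow> nat set \<Rightarrow> nat list" where
  "nontree N T = sorted_list_of_set ({0..<nE N} - T)"

definition cycle_mat :: "nat \<Rightarrow> nat set \<Rightarrow> (nat \<Rightarrow> nat list) \<Rightarrow> real mat" where
  "cycle_mat N T cyc =
     mat (length (nontree N T)) (nE N) (\<lambda>(i, k). cyc_sign N (cyc (nontree N T ! i)) k)"

text \<open>Representative of t mod 1 in [-1/2, 1/2).\<close>
definition crep :: "real \<Rightarrow> real" where
  "crep t = t - of_int \<lfloor>t + 1/2\<rfloor>"

text \<open>Initial signed lengths for node positions x (positions in [0,1) representing R/Z).\<close>
definition lbar :: "nat \<Rightarrow> (nat \<Rightarrow> real) \<Rightarrow> real vec" where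
  "lbar N x = vec (nE N) (\<lambda>k. crep (x (snd (edges N ! k)) - x (fst (edges N ! k))))"

definition lstar :: "nat \<Rightarrow> nat set \<Rightarrow> (nat \<Rightarrow> nat list) \<Rightarrow> (nat \<Rightarrow> real) \<Rightarrow> real vec" where
  "lstar N T cyc x =
     (let C = cycle_mat N T cyc
      in (transpose_mat C * the (mat_inverse (C * transpose_mat C)) * C) *\<^sub>v lbar N x)"

definition dl :: "nat \<Rightarrow> nat set \<Rightarrow> (nat \<Rightarrow> nat list) \<Rightarrow> (nat \<Rightarrow> real) \<Rightarrow> nat \<Rightarrow> real" where
  "dl N T cyc x k = lstar N T cyc x $ k - lbar N x $ k"

text \<open>Node positions i.i.d. uniform on R/Z, represented by [0,1).\<close>
definition pos_space :: "nat \<Rightarrow> (nat \<Rightarrow> real) measure" where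
  "pos_space N = PiM {0..<N} (\<lambda>_. uniform_measure lborel {0..<1})"

definition pos_edge_space :: "nat \<Rightarrow> ((nat \<Rightarrow> real) \<times> nat) measure" where
  "pos_edge_space N = pos_space N \<Otimes>\<^sub>M uniform_count_measure {0..<nE N}"

definition cond_var :: "'a measure \<Rightarrow> 'a measure \<Rightarrow> ('a \<Rightarrow> real) \<Rightarrow> 'a \<Rightarrow> real" where
  "cond_var M F X = real_cond_exp M F (\<lambda>\<omega>. (X \<omega> - real_cond_exp M F X \<omega>)\<^sup>2)"

end

theory Submission
  imports Defs "Jordan_Normal_Form.Determinant"
begin

text \<open>The fundamental cycles form a basis of the circulations, so C^T (C C^T)^-1 C is the
  orthogonal projection onto them and -\<Delta>l is the projection of lbar onto the gradients.
  The Laplacian of the complete graph is N I - J, hence that projection is the gradient of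
  div(lbar) / N: for the spring e = (a, b) one gets N \<Delta>l_e = -(2 lbar_e + \<Sigma>_c T_c), summed
  over the N - 2 other nodes c, where T_c depends only on the positions of a, b and c. Given
  the positions of a and b, the T_c are independent, centred, and of variance |lbar_e| - lbar_e^2
  (a sawtooth computation). Conditioning on lbar_e yields both formulas; since they do not
  depend on e, they also hold for a spring chosen uniformly at random.\<close>

section \<open>Uniform positions on the circle\<close>

abbreviation unif01 :: "real measure" where
  "unif01 \<equiv> uniform_measure lborel {0..<1}"

lemma prob_space_unif01: "prob_space unif01"
  by (rule prob_space_uniform_measure) auto

lemma borel_measurable_unif01_iff:
  "(f \<in> borel_measurable unif01) = (f \<in> (borel_measurable borel :: (real \<Rightarrow> real) set))"
proof -
  have "(borel_measurable unif01 :: (real \<Rightarrow> real) set) = borel_measurable borel"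
    by (rule measurable_cong_sets) auto
  then show ?thesis by simp
qed

lemma integrable_bounded_prob:
  fixes f :: "'a \<Rightarrow> real"
  assumes "prob_space M" "f \<in> borel_measurable M" "\<And>x. x \<in> space M \<Longrightarrow> \<bar>f x\<bar> \<le> K"
  shows "integrable M f"
proof -
  interpret prob_space M by fact
  show ?thesis by (rule integrable_const_bound[where B=K]) (use assms in \<open>auto intro!: AE_I2\<close>)
qed

lemma integral_unif01:
  fixes f :: "real \<Rightarrow> real"
  assumes [measurable]: "f \<in> borel_measurable borel" and bounded: "\<And>x. \<bar>f x\<bar> \<le> K"
  shows "integrable unif01 f" "integral\<^sup>L unif01 f = integral {0..1} f"
proof -
  show int: "integrable unif01 f"
    by (rule integrable_bounded_prob[OF prob_space_unif01, where K=K]) (auto simp: bounded borel_measurable_unif01_iff)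
  have density: "unif01 = density lborel (\<lambda>x. ennreal (indicator {0..<1::real} x))"
    unfolding uniform_measure_def by (simp add: ennreal_indicator divide_ennreal_def)
  have ae_closed: "AE x in lborel. indicator {0..<1::real} x *\<^sub>R f x = indicator {0..1} x *\<^sub>R f x"
    by (auto intro!: eventually_mono[OF AE_lborel_singleton[of 1]] simp: indicator_def)
  have "integrable lborel (\<lambda>x. indicator {0..<1::real} x *\<^sub>R f x)"
    using int unfolding density by (subst (asm) integrable_density) auto
  then have "set_integrable lborel {0..1::real} f"
    unfolding set_integrable_def by (rule integrable_cong_AE_imp[OF _ _ ae_closed]) auto
  have "integral\<^sup>L unif01 f = (\<integral>x. indicator {0..<1::real} x *\<^sub>R f x \<partial>lborel)"
    unfolding density by (subst integral_density) auto
  also have "\<dots> = (\<integral>x. indicator {0..1::real} x *\<^sub>R f x \<partial>lborel)"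
    by (rule integral_cong_AE) (use ae_closed in auto)
  also have "\<dots> = integral {0..1} f"
    using set_borel_integral_eq_integral(2)[OF \<open>set_integrable lborel {0..1} f\<close>]
    by (simp add: set_lebesgue_integral_def)
  finally show "integral\<^sup>L unif01 f = integral {0..1} f" .
qed

lemma crep_measurable[measurable]: "crep \<in> borel_measurable borel"
  unfolding crep_def by measurable

lemma crep_bounds: "-1/2 \<le> crep t" "crep t < 1/2"
  unfolding crep_def by linarith+

lemma abs_minus_square_bounds:
  fixes y :: real
  assumes "\<bar>y\<bar> \<le> 1"
  shows "0 \<le> \<bar>y\<bar> - y\<^sup>2" "\<bar>y\<bar> - y\<^sup>2 \<le> 1"
proof -
  have "y\<^sup>2 \<le> \<bar>y\<bar>"
    using mult_left_le[OF assms, of "\<bar>y\<bar>"] by (simp add: power2_eq_square abs_mult[symmetric])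
  then show "0 \<le> \<bar>y\<bar> - y\<^sup>2" "\<bar>y\<bar> - y\<^sup>2 \<le> 1"
    using assms zero_le_power2[of y] by linarith+
qed

lemma has_integral_affine_real:
  fixes a b p c :: real
  assumes "a \<le> b"
  shows "((\<lambda>y. p * y + c) has_integral (p * ((b\<^sup>2 - a\<^sup>2) / 2) + c * (b - a))) {a..b}"
proof -
  have "((\<lambda>y. p * y) has_integral (p * ((b\<^sup>2 - a\<^sup>2) / 2))) {a..b}"
    using has_integral_mult_right[OF ident_has_integral[OF assms]] by simp
  moreover have "((\<lambda>y. c) has_integral (c * (b - a))) {a..b}"
    using has_integral_const_real[of c a b] assms by (simp add: mult.commute)
  ultimately show ?thesis by (rule has_integral_add)
qed

text \<open>On [0,1] the shifted sawtooth is affine of slope 1 with a single unit drop at the point c.\<close>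
lemma has_integral_crep_shift: "((\<lambda>y. crep (y + s)) has_integral 0) {0..1}"
proof -
  define fl where "fl = real_of_int \<lfloor>s + 1/2\<rfloor>"
  define c where "c = 1 - (s + 1/2 - fl)"
  have fl: "fl \<le> s + 1/2" "s + 1/2 < fl + 1" unfolding fl_def by linarith+
  have c: "0 < c" "c \<le> 1" using fl unfolding c_def by auto
  have left: "((\<lambda>y. crep (y + s)) has_integral (1 * ((c\<^sup>2 - 0\<^sup>2)/2) + (s - fl) * (c - 0))) {0..c}"
  proof (rule has_integral_spike_finite[of "{c}", OF _ _ has_integral_affine_real])
    fix y assume "y \<in> {0..c} - {c}"
    then have "0 \<le> y" "y < c" by auto
    then have "\<lfloor>y + s + 1/2\<rfloor> = \<lfloor>s + 1/2\<rfloor>" using fl unfolding c_def fl_def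
      by - (rule floor_unique; linarith)
    then show "crep (y + s) = 1 * y + (s - fl)" unfolding crep_def fl_def by simp
  qed (use c in auto)
  have right: "((\<lambda>y. crep (y + s)) has_integral (1 * ((1\<^sup>2 - c\<^sup>2)/2) + (s - fl - 1) * (1 - c))) {c..1}"
  proof (rule has_integral_spike_finite[of "{}", OF _ _ has_integral_affine_real])
    fix y assume "y \<in> {c..1} - {}"
    then have "c \<le> y" "y \<le> 1" by auto
    then have "\<lfloor>y + s + 1/2\<rfloor> = \<lfloor>s + 1/2\<rfloor> + 1" using fl unfolding c_def fl_def
      by - (rule floor_unique; linarith)
    then show "crep (y + s) = 1 * y + (s - fl - 1)" unfolding crep_def fl_def by simp
  qed (use c in auto)
  have "(1 * ((c\<^sup>2 - 0\<^sup>2)/2) + (s - fl) * (c - 0)) + (1 * ((1\<^sup>2 - c\<^sup>2)/2) + (s - fl - 1) * (1 - c)) = 0"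
    unfolding c_def by (simp add: field_simps power2_eq_square)
  then show ?thesis
    using has_integral_combine[OF _ _ left right] c by simp
qed

definition spring_len :: "bool \<Rightarrow> real \<Rightarrow> real \<Rightarrow> real" where
  "spring_len towards u y = (if towards then crep (u - y) else - crep (y - u))"

lemma spring_len_measurable[measurable]:
  "(\<lambda>x. spring_len t (f x) (g x)) \<in> borel_measurable M"
  if [measurable]: "f \<in> borel_measurable M" "g \<in> borel_measurable M"
  unfolding spring_len_def by measurable

lemma abs_spring_len_le: "\<bar>spring_len t u y\<bar> \<le> 1/2"
  using crep_bounds[of "u - y"] crep_bounds[of "y - u"] unfolding spring_len_def by auto

lemma crep_uminus:
  assumes "t + 1/2 \<notin> \<int>"
  shows "crep (- t) = - crep t"
proof -
  have "real_of_int \<lfloor>t + 1/2\<rfloor> < t + 1/2"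
    using assms of_int_floor_le[of "t + 1/2"] by (metis Ints_of_int order_less_le)
  then have "\<lfloor>t + 1/2\<rfloor> + \<lfloor>- t + 1/2\<rfloor> = 0" by linarith
  then show ?thesis unfolding crep_def by (simp add: algebra_simps)
qed

lemma AE_spring_len_eq: "AE y in unif01. spring_len t u y = crep (u - y)"
proof -
  have "AE y in lborel. y \<notin> range (\<lambda>n::int. u - 1/2 + of_int n)"
    by (rule AE_not_in[OF countable_imp_null_set_lborel]) auto
  then have "AE y in unif01. y \<notin> range (\<lambda>n::int. u - 1/2 + of_int n)"
    by (intro AE_uniform_measureI) (auto elim: eventually_mono)
  then show ?thesis
  proof eventually_elim
    case (elim y)
    have "y - u + 1/2 \<notin> \<int>"
    proof
      assume "y - u + 1/2 \<in> \<int>"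
      then obtain n where "y = u - 1/2 + of_int n" by (auto elim!: Ints_cases simp: algebra_simps)
      with elim show False by auto
    qed
    then show ?case unfolding spring_len_def using crep_uminus[of "y - u"] by simp
  qed
qed

lemma spring_len_unif01:
  "integrable unif01 (spring_len t u)" "integral\<^sup>L unif01 (spring_len t u) = 0"
proof -
  have [measurable]: "spring_len t' u \<in> borel_measurable borel" for t'
    unfolding spring_len_def by measurable
  show "integrable unif01 (spring_len t u)"
    by (rule integral_unif01(1)[OF _ abs_spring_len_le]) measurable
  have "integral\<^sup>L unif01 (spring_len t u) = integral\<^sup>L unif01 (spring_len False u)"
    using AE_spring_len_eq[of t u] AE_spring_len_eq[of False u]
    by (intro integral_cong_AE) (auto simp: borel_measurable_unif01_iff elim: eventually_elim2)
  also have "\<dots> = integral {0..1} (spring_len False u)"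
    by (rule integral_unif01(2)[OF _ abs_spring_len_le]) measurable
  also have "\<dots> = 0"
  proof -
    have "(spring_len False u has_integral 0) {0..1}"
      using has_integral_neg[OF has_integral_crep_shift[of "- u"]]
      by (simp add: spring_len_def[abs_def])
    then show ?thesis by (rule integral_unique)
  qed
  finally show "integral\<^sup>L unif01 (spring_len t u) = 0" .
qed

text \<open>If Z differs from Y = crep t by an integer and |Z| < 1, then Z is Y or Y - sgn Y,
  so Z is a root of a quadratic whose coefficients depend on Y only.\<close>
lemma square_eq_affine_of_crep_shift:
  fixes Y Z :: real
  assumes "-1/2 \<le> Y" "Y < 1/2" "-1 < Z" "Z < 1" "Z = Y + of_int m"
  shows "Z\<^sup>2 = (if Y \<ge> 0 then 2 * Y - 1 else 2 * Y + 1) * Z + (\<bar>Y\<bar> - Y\<^sup>2)"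
proof (cases "Y \<ge> 0")
  case True
  have "real_of_int m < 1" "real_of_int m > -2" using assms True by linarith+
  then have "m = 0 \<or> m = -1" by linarith
  then show ?thesis using True assms by (auto simp: power2_eq_square algebra_simps)
next
  case False
  have "real_of_int m < 2" "real_of_int m > -1" using assms False by linarith+
  then have "m = 0 \<or> m = 1" by linarith
  then show ?thesis using False assms by (auto simp: power2_eq_square algebra_simps)
qed

lemma spring_len_diff_unif01:
  fixes p q :: real
  defines "Y \<equiv> crep (q - p)"
  shows "integrable unif01 (\<lambda>y. spring_len s q y - spring_len s' p y)"
    "integral\<^sup>L unif01 (\<lambda>y. spring_len s q y - spring_len s' p y) = 0"
    "integrable unif01 (\<lambda>y. (spring_len s q y - spring_len s' p y)\<^sup>2)"
    "integral\<^sup>L unif01 (\<lambda>y. (spring_len s q y - spring_len s' p y)\<^sup>2) = \<bar>Y\<bar> - Y\<^sup>2"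
proof -
  interpret prob_space unif01 by (rule prob_space_unif01)
  let ?D = "\<lambda>y. spring_len s q y - spring_len s' p y"
  show int: "integrable unif01 ?D"
    using spring_len_unif01 by auto
  show mean: "integral\<^sup>L unif01 ?D = 0"
    using spring_len_unif01 by simp
  have bounded: "\<bar>?D y\<bar> \<le> 1" for y
    using abs_spring_len_le[of s q y] abs_spring_len_le[of s' p y] by linarith
  show "integrable unif01 (\<lambda>y. (?D y)\<^sup>2)"
    by (rule integrable_bounded_prob[OF prob_space_unif01, where K=1])
      (auto simp: borel_measurable_unif01_iff abs_square_le_1 bounded)
  define \<alpha> where "\<alpha> = (if Y \<ge> 0 then 2 * Y - 1 else 2 * Y + 1)"
  have "AE y in unif01. (?D y)\<^sup>2 = \<alpha> * ?D y + (\<bar>Y\<bar> - Y\<^sup>2)"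
    using AE_spring_len_eq[of s q] AE_spring_len_eq[of s' p]
  proof eventually_elim
    case (elim y)
    have "crep (q - y) - crep (p - y) = Y + of_int (\<lfloor>q - p + 1/2\<rfloor> - \<lfloor>q - y + 1/2\<rfloor> + \<lfloor>p - y + 1/2\<rfloor>)"
      unfolding Y_def crep_def by simp
    then show ?case unfolding \<alpha>_def elim
      by (rule square_eq_affine_of_crep_shift[rotated 4])
        (use crep_bounds[of "q - p"] crep_bounds[of "q - y"] crep_bounds[of "p - y"] in \<open>auto simp: Y_def\<close>)
  qed
  then have "integral\<^sup>L unif01 (\<lambda>y. (?D y)\<^sup>2) = integral\<^sup>L unif01 (\<lambda>y. \<alpha> * ?D y + (\<bar>Y\<bar> - Y\<^sup>2))"
    by (rule integral_cong_AE[rotated 2]) (auto simp: borel_measurable_unif01_iff)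
  also have "\<dots> = \<bar>Y\<bar> - Y\<^sup>2"
    using int mean prob_space by (simp add: Bochner_Integration.integral_add)
  finally show "integral\<^sup>L unif01 (\<lambda>y. (?D y)\<^sup>2) = \<bar>Y\<bar> - Y\<^sup>2" .
qed

section \<open>Independent node positions\<close>

lemma pos_space_eq: "pos_space N = PiM {0..<N} (\<lambda>_. unif01)"
  unfolding pos_space_def ..

interpretation unif01_product: product_sigma_finite "\<lambda>_::nat. unif01"
  unfolding product_sigma_finite_def using prob_space_imp_sigma_finite[OF prob_space_unif01] by simp

lemma prob_space_pos_space: "prob_space (pos_space N)"
  unfolding pos_space_eq by (rule prob_space_PiM) (rule prob_space_unif01)

lemma pos_space_component_measurable[measurable]:
  "i < N \<Longrightarrow> (\<lambda>x. x i) \<in> borel_measurable (pos_space N)"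
proof -
  assume "i < N"
  then have "(\<lambda>x. x i) \<in> measurable (PiM {0..<N} (\<lambda>_. unif01)) unif01"
    by (intro measurable_component_singleton) simp
  moreover have "measurable (PiM {0..<N} (\<lambda>_. unif01)) unif01 = borel_measurable (PiM {0..<N} (\<lambda>_. unif01))"
    by (rule measurable_cong_sets) auto
  ultimately show ?thesis unfolding pos_space_eq by simp
qed

lemma integral_pos_space_component:
  fixes f :: "(nat \<Rightarrow> real) \<Rightarrow> real"
  assumes "c < N" and "integrable (pos_space N) f"
  shows "integral\<^sup>L (pos_space N) f =
    (\<integral>x. (\<integral>y. f (x(c := y)) \<partial>unif01) \<partial>PiM ({0..<N} - {c}) (\<lambda>_. unif01))"
proof -
  have split: "insert c ({0..<N} - {c}) = {0..<N}" using assms(1) by auto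
  show ?thesis
    using unif01_product.product_integral_insert[of "{0..<N} - {c}" c f] assms(2)
    unfolding pos_space_eq split by simp
qed

lemma integral_spring_len_diff_pos_space:
  fixes G :: "(nat \<Rightarrow> real) \<Rightarrow> real" and s s' :: bool
  assumes nodes: "a < N" "b < N" "c < N" "c \<noteq> a" "c \<noteq> b"
    and [measurable]: "G \<in> borel_measurable (pos_space N)"
    and G_bounded: "\<And>x. \<bar>G x\<bar> \<le> K"
    and G_indep: "\<And>x y. G (x(c := y)) = G x"
  defines "D \<equiv> \<lambda>x. spring_len s (x b) (x c) - spring_len s' (x a) (x c)"
  shows "(\<integral>x. G x * D x \<partial>pos_space N) = 0"
    "(\<integral>x. G x * (D x)\<^sup>2 \<partial>pos_space N) =
     (\<integral>x. G x * (\<bar>crep (x b - x a)\<bar> - (crep (x b - x a))\<^sup>2) \<partial>pos_space N)"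
proof -
  have D_bounded: "\<bar>D x\<bar> \<le> 1" for x
    unfolding D_def using abs_spring_len_le[of s "x b" "x c"] abs_spring_len_le[of s' "x a" "x c"]
    by linarith
  have var_bounded: "\<bar>\<bar>crep t\<bar> - (crep t)\<^sup>2\<bar> \<le> 1" for t
    using abs_minus_square_bounds[of "crep t"] crep_bounds[of t] by (simp add: abs_le_iff)
  have G_times: "\<bar>G x * F\<bar> \<le> K" if "\<bar>F\<bar> \<le> 1" for x F
    unfolding abs_mult by (rule order_trans[OF mult_left_le G_bounded]) (use that in auto)
  have int: "integrable (pos_space N) (\<lambda>x. G x * F x)"
    if "F \<in> borel_measurable (pos_space N)" "\<And>x. \<bar>F x\<bar> \<le> 1" for F
    by (rule integrable_bounded_prob[OF prob_space_pos_space, where K=K])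
      (use that in \<open>auto intro: G_times\<close>)
  have [measurable]: "D \<in> borel_measurable (pos_space N)" unfolding D_def using nodes by measurable
  have upd: "D (x(c := y)) = spring_len s (x b) y - spring_len s' (x a) y" for x y
    unfolding D_def using nodes by simp
  have var_measurable: "(\<lambda>x. \<bar>crep (x b - x a)\<bar> - (crep (x b - x a))\<^sup>2) \<in> borel_measurable (pos_space N)"
    using nodes by measurable
  have int1: "integrable (pos_space N) (\<lambda>x. G x * D x)"
    by (rule int[OF _ D_bounded]) measurable
  have int2: "integrable (pos_space N) (\<lambda>x. G x * (D x)\<^sup>2)"
    by (rule int) (auto simp: abs_square_le_1 D_bounded)
  note int3 = int[OF var_measurable var_bounded]
  interpret prob_space unif01 by (rule prob_space_unif01)
  show "(\<integral>x. G x * D x \<partial>pos_space N) = 0"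
    unfolding integral_pos_space_component[OF nodes(3) int1] using nodes
    by (simp add: G_indep upd spring_len_diff_unif01)
  show "(\<integral>x. G x * (D x)\<^sup>2 \<partial>pos_space N) =
     (\<integral>x. G x * (\<bar>crep (x b - x a)\<bar> - (crep (x b - x a))\<^sup>2) \<partial>pos_space N)"
    unfolding integral_pos_space_component[OF nodes(3) int2] integral_pos_space_component[OF nodes(3) int3]
    using nodes by (simp add: G_indep upd spring_len_diff_unif01)
qed

section \<open>Conditioning on a real random variable\<close>

lemma AE_real_cond_exp_vimage_eq:
  fixes Y f :: "'a \<Rightarrow> real" and \<phi> :: "real \<Rightarrow> real"
  assumes "prob_space M" and [measurable]: "Y \<in> borel_measurable M" "f \<in> borel_measurable M"
    "\<phi> \<in> borel_measurable borel"
    and bounded: "\<And>x. x \<in> space M \<Longrightarrow> \<bar>f x\<bar> \<le> K" "\<And>x. x \<in> space M \<Longrightarrow> \<bar>\<phi> (Y x)\<bar> \<le> K"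
    and moments: "\<And>B. B \<in> sets borel \<Longrightarrow>
      (\<integral>x. indicator B (Y x) * f x \<partial>M) = (\<integral>x. indicator B (Y x) * \<phi> (Y x) \<partial>M)"
  shows "AE x in M. real_cond_exp M (vimage_algebra (space M) Y borel) f x = \<phi> (Y x)"
proof -
  let ?F = "vimage_algebra (space M) Y borel"
  interpret prob_space M by fact
  have "subalgebra M ?F"
    unfolding subalgebra_def using measurable_iff_sets[of Y M borel] by auto
  then interpret finite_measure_subalgebra M ?F
    by unfold_locales
  show ?thesis
  proof (rule real_cond_exp_charact)
    fix A assume "A \<in> sets ?F"
    then obtain B where B: "B \<in> sets borel" "A = Y -` B \<inter> space M"
      using sets_vimage_algebra2[of Y "space M" borel] by auto
    have set_integral: "(\<integral>x\<in>A. g x \<partial>M) = (\<integral>x. indicator B (Y x) * g x \<partial>M)" for g :: "'a \<Rightarrow> real"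
      unfolding set_lebesgue_integral_def B(2)
      by (rule Bochner_Integration.integral_cong) (auto simp: indicator_def)
    show "(\<integral>x\<in>A. f x \<partial>M) = (\<integral>x\<in>A. \<phi> (Y x) \<partial>M)"
      unfolding set_integral using moments[OF B(1)] .
  next
    show "integrable M f" "integrable M (\<lambda>x. \<phi> (Y x))"
      by (auto intro!: integrable_bounded_prob[OF \<open>prob_space M\<close>] bounded)
    have "Y \<in> measurable ?F borel"
      by (rule measurable_vimage_algebra1) auto
    then show "(\<lambda>x. \<phi> (Y x)) \<in> borel_measurable ?F"
      by measurable
  qed
qed

lemma AE_cond_var_vimage_eq:
  fixes Y f :: "'a \<Rightarrow> real" and \<phi> \<psi> :: "real \<Rightarrow> real"
  assumes "prob_space M" and [measurable]: "Y \<in> borel_measurable M" "f \<in> borel_measurable M"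
    "\<phi> \<in> borel_measurable borel" "\<psi> \<in> borel_measurable borel"
    and bounded: "\<And>x. x \<in> space M \<Longrightarrow> \<bar>f x\<bar> \<le> K" "\<And>x. x \<in> space M \<Longrightarrow> \<bar>\<phi> (Y x)\<bar> \<le> K"
      "\<And>x. x \<in> space M \<Longrightarrow> \<bar>\<psi> (Y x)\<bar> \<le> K"
    and mean: "\<And>B. B \<in> sets borel \<Longrightarrow>
      (\<integral>x. indicator B (Y x) * f x \<partial>M) = (\<integral>x. indicator B (Y x) * \<phi> (Y x) \<partial>M)"
    and variance: "\<And>B. B \<in> sets borel \<Longrightarrow>
      (\<integral>x. indicator B (Y x) * (f x - \<phi> (Y x))\<^sup>2 \<partial>M) = (\<integral>x. indicator B (Y x) * \<psi> (Y x) \<partial>M)"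
  shows "AE x in M. cond_var M (vimage_algebra (space M) Y borel) f x = \<psi> (Y x)"
proof -
  let ?F = "vimage_algebra (space M) Y borel"
  interpret prob_space M by fact
  have "subalgebra M ?F"
    unfolding subalgebra_def using measurable_iff_sets[of Y M borel] by auto
  then interpret finite_measure_subalgebra M ?F
    by unfold_locales
  have cond_mean: "AE x in M. real_cond_exp M ?F f x = \<phi> (Y x)"
    by (rule AE_real_cond_exp_vimage_eq[OF \<open>prob_space M\<close> _ _ _ bounded(1,2) mean]) auto
  have "real_cond_exp M ?F f \<in> borel_measurable M"
    by (rule measurable_from_subalg[OF subalg borel_measurable_cond_exp])
  then have "AE x in M. cond_var M ?F f x = real_cond_exp M ?F (\<lambda>x. (f x - \<phi> (Y x))\<^sup>2) x"
    unfolding cond_var_def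
    by (intro real_cond_exp_cong) (use cond_mean in \<open>auto elim!: eventually_mono\<close>)
  moreover have "AE x in M. real_cond_exp M ?F (\<lambda>x. (f x - \<phi> (Y x))\<^sup>2) x = \<psi> (Y x)"
  proof (rule AE_real_cond_exp_vimage_eq[where K="max (4 * K\<^sup>2) K",
        OF \<open>prob_space M\<close> _ _ _ _ _ variance])
    fix x assume x: "x \<in> space M"
    have "\<bar>f x - \<phi> (Y x)\<bar> \<le> \<bar>2 * K\<bar>" using bounded(1,2)[OF x] by linarith
    then have "(f x - \<phi> (Y x))\<^sup>2 \<le> (2 * K)\<^sup>2" by (simp only: abs_le_square_iff)
    then show "\<bar>(f x - \<phi> (Y x))\<^sup>2\<bar> \<le> max (4 * K\<^sup>2) K" by (simp add: power_mult_distrib)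
  qed (auto simp: le_max_iff_disj bounded(3))
  ultimately show ?thesis by eventually_elim simp
qed

lemma measurable_uniform_index:
  fixes G :: "'a \<Rightarrow> nat \<Rightarrow> real"
  assumes "\<And>i. i < n \<Longrightarrow> (\<lambda>x. G x i) \<in> borel_measurable M"
  shows "(\<lambda>(x, i). G x i) \<in> borel_measurable (M \<Otimes>\<^sub>M uniform_count_measure {0..<n})"
proof -
  let ?U = "uniform_count_measure {0..<n}"
  have "snd \<in> measurable (M \<Otimes>\<^sub>M ?U) ?U"
    by (rule measurable_snd)
  moreover have "measurable (M \<Otimes>\<^sub>M ?U) ?U = measurable (M \<Otimes>\<^sub>M ?U) (count_space {0..<n})"
    by (rule measurable_cong_sets) (auto simp: sets_uniform_count_measure_count_space)
  ultimately have "snd \<in> measurable (M \<Otimes>\<^sub>M ?U) (count_space {0..<n})"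
    by simp
  then have "(\<lambda>\<omega>. G (fst \<omega>) (snd \<omega>)) \<in> borel_measurable (M \<Otimes>\<^sub>M ?U)"
    by (rule measurable_compose_countable'[where f="\<lambda>i \<omega>. G (fst \<omega>) i", rotated])
      (auto intro: measurable_compose[OF measurable_fst assms])
  then show ?thesis
    by (simp add: case_prod_beta)
qed

lemma integral_uniform_index:
  fixes G :: "'a \<Rightarrow> nat \<Rightarrow> real"
  assumes M: "prob_space M" and "0 < n"
    and measurable: "\<And>i. i < n \<Longrightarrow> (\<lambda>x. G x i) \<in> borel_measurable M"
    and bounded: "\<And>x i. x \<in> space M \<Longrightarrow> i < n \<Longrightarrow> \<bar>G x i\<bar> \<le> K"
  shows "integral\<^sup>L (M \<Otimes>\<^sub>M uniform_count_measure {0..<n}) (\<lambda>(x, i). G x i) =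
       (\<Sum>i\<in>{0..<n}. \<integral>x. G x i \<partial>M) / real n"
proof -
  let ?U = "uniform_count_measure {0..<n}"
  have U: "prob_space ?U"
    by (rule prob_space_uniform_count_measure) (use \<open>0 < n\<close> in auto)
  interpret pair_sigma_finite M ?U
    by (intro pair_sigma_finite.intro prob_space_imp_sigma_finite M U)
  have "integrable (M \<Otimes>\<^sub>M ?U) (\<lambda>(x, i). G x i)"
    by (rule integrable_bounded_prob[OF prob_space_pair[OF M U] measurable_uniform_index[OF measurable], where K=K])
      (auto simp: space_pair_measure space_uniform_count_measure bounded)
  then have "integral\<^sup>L (M \<Otimes>\<^sub>M ?U) (\<lambda>(x, i). G x i) = (\<integral>i. (\<integral>x. G x i \<partial>M) \<partial>?U)"
    using integral_snd[of G] by simp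
  then show ?thesis
    by (simp add: integral_uniform_count_measure)
qed

lemma integral_indicator_uniform_index_eq:
  fixes Y g :: "'a \<Rightarrow> nat \<Rightarrow> real" and h :: "real \<Rightarrow> real"
  assumes M: "prob_space M" and "0 < n"
    and [measurable]: "B \<in> sets borel" "h \<in> borel_measurable borel"
      "\<And>i. i < n \<Longrightarrow> (\<lambda>x. Y x i) \<in> borel_measurable M" "\<And>i. i < n \<Longrightarrow> (\<lambda>x. g x i) \<in> borel_measurable M"
    and bounded: "\<And>x i. x \<in> space M \<Longrightarrow> i < n \<Longrightarrow> \<bar>g x i\<bar> \<le> K"
      "\<And>x i. x \<in> space M \<Longrightarrow> i < n \<Longrightarrow> \<bar>h (Y x i)\<bar> \<le> K"
    and eq: "\<And>i. i < n \<Longrightarrow> (\<integral>x. indicator B (Y x i) * g x i \<partial>M) = (\<integral>x. indicator B (Y x i) * h (Y x i) \<partial>M)"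
  shows "integral\<^sup>L (M \<Otimes>\<^sub>M uniform_count_measure {0..<n}) (\<lambda>(x, i). indicator B (Y x i) * g x i) =
    integral\<^sup>L (M \<Otimes>\<^sub>M uniform_count_measure {0..<n}) (\<lambda>(x, i). indicator B (Y x i) * h (Y x i))"
proof -
  have indicator_times: "\<bar>indicator B y * t\<bar> \<le> K" if "\<bar>t\<bar> \<le> K" for y t :: real
    using that by (auto simp: indicator_def)
  have "\<And>i. i < n \<Longrightarrow> (\<lambda>x. indicator B (Y x i) * g x i) \<in> borel_measurable M"
    "\<And>i. i < n \<Longrightarrow> (\<lambda>x. indicator B (Y x i) * h (Y x i)) \<in> borel_measurable M"
    by measurable
  then show ?thesis
    using integral_uniform_index[OF M \<open>0 < n\<close>, where G="\<lambda>x i. indicator B (Y x i) * g x i" and K=K]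
      integral_uniform_index[OF M \<open>0 < n\<close>, where G="\<lambda>x i. indicator B (Y x i) * h (Y x i)" and K=K]
      indicator_times bounded eq by simp
qed

text \<open>Choosing the index uniformly at random preserves a conditional law shared by all
  indices.\<close>
lemma AE_cond_var_uniform_index_eq:
  fixes M :: "'a measure" and n :: nat and Y f :: "'a \<Rightarrow> nat \<Rightarrow> real" and \<phi> \<psi> :: "real \<Rightarrow> real"
  defines "P \<equiv> M \<Otimes>\<^sub>M uniform_count_measure {0..<n}"
  assumes M: "prob_space M" and "0 < n"
    and [measurable]: "\<And>i. i < n \<Longrightarrow> (\<lambda>x. Y x i) \<in> borel_measurable M"
      "\<And>i. i < n \<Longrightarrow> (\<lambda>x. f x i) \<in> borel_measurable M"
      "\<phi> \<in> borel_measurable borel" "\<psi> \<in> borel_measurable borel"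
    and bounded: "\<And>x i. x \<in> space M \<Longrightarrow> i < n \<Longrightarrow> \<bar>f x i\<bar> \<le> K"
      "\<And>x i. x \<in> space M \<Longrightarrow> i < n \<Longrightarrow> \<bar>\<phi> (Y x i)\<bar> \<le> K"
      "\<And>x i. x \<in> space M \<Longrightarrow> i < n \<Longrightarrow> \<bar>\<psi> (Y x i)\<bar> \<le> K"
    and mean: "\<And>i B. i < n \<Longrightarrow> B \<in> sets borel \<Longrightarrow>
      (\<integral>x. indicator B (Y x i) * f x i \<partial>M) = (\<integral>x. indicator B (Y x i) * \<phi> (Y x i) \<partial>M)"
    and variance: "\<And>i B. i < n \<Longrightarrow> B \<in> sets borel \<Longrightarrow>
      (\<integral>x. indicator B (Y x i) * (f x i - \<phi> (Y x i))\<^sup>2 \<partial>M) = (\<integral>x. indicator B (Y x i) * \<psi> (Y x i) \<partial>M)"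
  shows "AE \<omega> in P. cond_var P (vimage_algebra (space P) (\<lambda>(x, i). Y x i) borel) (\<lambda>(x, i). f x i) \<omega>
    = \<psi> ((\<lambda>(x, i). Y x i) \<omega>)"
proof -
  let ?K = "max (4 * K\<^sup>2) K"
  have P: "prob_space P" unfolding P_def
    by (intro prob_space_pair M prob_space_uniform_count_measure) (use \<open>0 < n\<close> in auto)
  have space_P: "\<omega> \<in> space P \<Longrightarrow> fst \<omega> \<in> space M \<and> snd \<omega> < n" for \<omega>
    unfolding P_def by (auto simp: space_pair_measure space_uniform_count_measure)
  have sq_bounded: "\<bar>(f x i - \<phi> (Y x i))\<^sup>2\<bar> \<le> ?K" if "x \<in> space M" "i < n" for x i
  proof -
    have "\<bar>f x i - \<phi> (Y x i)\<bar> \<le> \<bar>2 * K\<bar>" using bounded(1,2)[OF that] by linarith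
    then show ?thesis by (simp add: abs_le_square_iff power_mult_distrib)
  qed
  show ?thesis
  proof (rule AE_cond_var_vimage_eq[OF P, where K="?K"])
    show "(\<lambda>(x, i). Y x i) \<in> borel_measurable P" "(\<lambda>(x, i). f x i) \<in> borel_measurable P"
      unfolding P_def by (rule measurable_uniform_index; simp)+
  next
    fix \<omega> assume "\<omega> \<in> space P"
    then show "\<bar>(\<lambda>(x, i). f x i) \<omega>\<bar> \<le> ?K" "\<bar>\<phi> ((\<lambda>(x, i). Y x i) \<omega>)\<bar> \<le> ?K"
      "\<bar>\<psi> ((\<lambda>(x, i). Y x i) \<omega>)\<bar> \<le> ?K"
      using space_P by (auto simp: case_prod_beta le_max_iff_disj bounded)
  next
    fix B :: "real set" assume "B \<in> sets borel"
    show "(\<integral>\<omega>. indicator B ((\<lambda>(x, i). Y x i) \<omega>) * (\<lambda>(x, i). f x i) \<omega> \<partial>P) =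
        (\<integral>\<omega>. indicator B ((\<lambda>(x, i). Y x i) \<omega>) * \<phi> ((\<lambda>(x, i). Y x i) \<omega>) \<partial>P)"
      using integral_indicator_uniform_index_eq[OF M \<open>0 < n\<close> \<open>B \<in> sets borel\<close>, of \<phi> Y f K]
        bounded mean \<open>B \<in> sets borel\<close> unfolding P_def by (simp add: case_prod_beta case_prod_beta')
    show "(\<integral>\<omega>. indicator B ((\<lambda>(x, i). Y x i) \<omega>) *
          ((\<lambda>(x, i). f x i) \<omega> - \<phi> ((\<lambda>(x, i). Y x i) \<omega>))\<^sup>2 \<partial>P) =
        (\<integral>\<omega>. indicator B ((\<lambda>(x, i). Y x i) \<omega>) * \<psi> ((\<lambda>(x, i). Y x i) \<omega>) \<partial>P)"
      using integral_indicator_uniform_index_eq[OF M \<open>0 < n\<close> \<open>B \<in> sets borel\<close>, of \<psi> Y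
          "\<lambda>x i. (f x i - \<phi> (Y x i))\<^sup>2" ?K]
        sq_bounded bounded(3) variance \<open>B \<in> sets borel\<close> unfolding P_def
      by (simp add: case_prod_beta case_prod_beta' le_max_iff_disj)
  qed simp_all
qed

section \<open>The complete graph\<close>

lemma set_edges: "set (edges N) = {(a, b). a < b \<and> b < N}"
  unfolding edges_def by auto

lemma distinct_edges: "distinct (edges N)"
  unfolding edges_def by (induction N) (auto simp: distinct_map inj_on_def)

lemma edges_nth_less: "k < nE N \<Longrightarrow> fst (edges N ! k) < snd (edges N ! k) \<and> snd (edges N ! k) < N"
  using nth_mem[of k "edges N"] unfolding nE_def set_edges by auto

lemma edges_nth_eq_iff: "k < nE N \<Longrightarrow> k' < nE N \<Longrightarrow> edges N ! k = edges N ! k' \<longleftrightarrow> k = k'"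
  using distinct_edges[of N] nth_eq_iff_index_eq unfolding nE_def by blast

lemma edges_nth_eq_unordered:
  assumes "k < nE N" "k' < nE N"
    and "edges N ! k = (u, v) \<or> edges N ! k = (v, u)"
    and "edges N ! k' = (u, v) \<or> edges N ! k' = (v, u)"
  shows "k = k'"
proof -
  have "fst (edges N ! k) < snd (edges N ! k)" "fst (edges N ! k') < snd (edges N ! k')"
    using edges_nth_less assms(1,2) by auto
  then show ?thesis using edges_nth_eq_iff[OF assms(1,2)] assms(3,4) by auto
qed

lemma sum_edges: "(\<Sum>k<nE N. G (edges N ! k)) = (\<Sum>e\<in>set (edges N). G e)"
proof -
  have "(\<Sum>k<nE N. G (edges N ! k)) = sum_list (map G (edges N))"
    unfolding sum_list_sum_nth nE_def by (simp add: lessThan_atLeast0)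
  also have "\<dots> = (\<Sum>e\<in>set (edges N). G e)"
    by (rule sum_list_distinct_conv_sum_set[OF distinct_edges])
  finally show ?thesis .
qed

lemma sum_edges_delta:
  "(\<Sum>k<nE N. if edges N ! k = e then G (edges N ! k) else 0) =
   (if fst e < snd e \<and> snd e < N then G e else 0)"
  unfolding sum_edges[of "\<lambda>e'. if e' = e then G e' else 0"] sum.delta[OF finite_set]
  by (cases e) (simp add: set_edges)

lemma sum_edges_pairs: "(\<Sum>k<nE N. G (edges N ! k)) = (\<Sum>b<N. \<Sum>a<b. G (a, b))"
proof (induction N)
  case 0
  then show ?case by (simp add: sum_edges set_edges)
next
  case (Suc N)
  have new_node: "set (edges (Suc N)) = set (edges N) \<union> (\<lambda>a. (a, N)) ` {..<N}"
    unfolding set_edges by auto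
  have "(\<Sum>k<nE (Suc N). G (edges (Suc N) ! k)) =
      (\<Sum>e\<in>set (edges N). G e) + (\<Sum>e\<in>(\<lambda>a. (a, N)) ` {..<N}. G e)"
    unfolding sum_edges new_node by (rule sum.union_disjoint[OF finite_set]) (auto simp: set_edges)
  also have "(\<Sum>e\<in>(\<lambda>a. (a, N)) ` {..<N}. G e) = (\<Sum>a<N. G (a, N))"
    by (subst sum.reindex) (auto simp: inj_on_def)
  finally show ?case using Suc by (simp add: sum_edges)
qed

definition incidence :: "nat \<Rightarrow> nat \<Rightarrow> nat \<Rightarrow> real" where
  "incidence N u k =
     (if snd (edges N ! k) = u then 1 else 0) - (if fst (edges N ! k) = u then 1 else 0)"

definition divergence :: "nat \<Rightarrow> real vec \<Rightarrow> nat \<Rightarrow> real" where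
  "divergence N v u = (\<Sum>k<nE N. v $ k * incidence N u k)"

definition is_circulation :: "nat \<Rightarrow> (nat \<Rightarrow> real) \<Rightarrow> bool" where
  "is_circulation N w \<longleftrightarrow>
     (\<forall>\<phi>. (\<Sum>k<nE N. w k * (\<phi> (snd (edges N ! k)) - \<phi> (fst (edges N ! k)))) = 0)"

text \<open>The Laplacian of the complete graph is N I - J, so for v with divergence s the
  gradient of s / N is the orthogonal projection of v onto the gradients.\<close>
definition gradient_part :: "nat \<Rightarrow> real vec \<Rightarrow> real vec" where
  "gradient_part N v = vec (nE N)
     (\<lambda>k. (divergence N v (snd (edges N ! k)) - divergence N v (fst (edges N ! k))) / real N)"

lemma diff_eq_sum_incidence:
  assumes "k < nE N"
  shows "\<phi> (snd (edges N ! k)) - \<phi> (fst (edges N ! k)) = (\<Sum>u<N. \<phi> u * incidence N u k)"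
proof -
  have delta: "(\<Sum>u<N. \<phi> u * (if c = u then 1 else 0)) = \<phi> c" if "c < N" for c
  proof -
    have "(\<Sum>u<N. \<phi> u * (if c = u then 1 else 0)) = (\<Sum>u<N. if u = c then \<phi> c else 0)"
      by (rule sum.cong) auto
    then show ?thesis using that by simp
  qed
  show ?thesis
    using edges_nth_less[OF assms] unfolding incidence_def
    by (simp add: right_diff_distrib sum_subtractf delta)
qed

lemma sum_edges_mult_diff:
  "(\<Sum>k<nE N. v $ k * (\<phi> (snd (edges N ! k)) - \<phi> (fst (edges N ! k)))) =
   (\<Sum>u<N. \<phi> u * divergence N v u)"
proof -
  have "(\<Sum>k<nE N. v $ k * (\<phi> (snd (edges N ! k)) - \<phi> (fst (edges N ! k)))) =
      (\<Sum>k<nE N. \<Sum>u<N. v $ k * (\<phi> u * incidence N u k))"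
    by (simp add: diff_eq_sum_incidence sum_distrib_left)
  also have "\<dots> = (\<Sum>u<N. \<phi> u * divergence N v u)"
    unfolding divergence_def by (subst sum.swap) (simp add: sum_distrib_left algebra_simps)
  finally show ?thesis .
qed

lemma sum_divergence: "(\<Sum>u<N. divergence N v u) = 0"
  using sum_edges_mult_diff[of v "\<lambda>_. 1" N] by simp

lemma sum_pairs_mult_diff:
  "(\<Sum>b<N. \<Sum>a<b. (s b - s a) * (\<phi> b - \<phi> a)) =
   real N * (\<Sum>u<N. s u * \<phi> u) - (\<Sum>u<N. s u) * (\<Sum>u<N. \<phi> u :: real)"
proof (induction N)
  case (Suc N)
  have "(\<Sum>a<N. (s N - s a) * (\<phi> N - \<phi> a)) =
      real N * (s N * \<phi> N) - s N * (\<Sum>u<N. \<phi> u) - \<phi> N * (\<Sum>u<N. s u) + (\<Sum>u<N. s u * \<phi> u)"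
    by (simp add: algebra_simps sum.distrib sum_subtractf sum_distrib_left)
  then show ?case using Suc by (simp add: algebra_simps)
qed simp

lemma is_circulation_diff_gradient_part:
  assumes "N > 0" and "dim_vec v = nE N"
  shows "is_circulation N (\<lambda>k. (v - gradient_part N v) $ k)"
  unfolding is_circulation_def
proof
  fix \<phi> :: "nat \<Rightarrow> real"
  let ?s = "divergence N v" and ?d = "\<lambda>k. \<phi> (snd (edges N ! k)) - \<phi> (fst (edges N ! k))"
  have "(\<Sum>k<nE N. gradient_part N v $ k * ?d k) =
      (\<Sum>k<nE N. (\<lambda>(a, b). (?s b - ?s a) * (\<phi> b - \<phi> a) / real N) (edges N ! k))"
    unfolding gradient_part_def by (rule sum.cong) (auto simp: case_prod_beta)
  also have "\<dots> = (\<Sum>b<N. \<Sum>a<b. (?s b - ?s a) * (\<phi> b - \<phi> a)) / real N"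
    unfolding sum_edges_pairs by (simp add: sum_divide_distrib)
  also have "\<dots> = (\<Sum>u<N. \<phi> u * ?s u)"
    unfolding sum_pairs_mult_diff sum_divergence using assms(1) by (simp add: mult.commute)
  finally have "(\<Sum>k<nE N. gradient_part N v $ k * ?d k) = (\<Sum>u<N. \<phi> u * ?s u)" .
  then show "(\<Sum>k<nE N. (v - gradient_part N v) $ k * ?d k) = 0"
    using sum_edges_mult_diff[of v \<phi> N] assms(2)
    by (simp add: gradient_part_def left_diff_distrib sum_subtractf)
qed

section \<open>Cycles, and circulations supported on a forest\<close>

lemma sum_lessThan_rotate: "(\<Sum>i<(L::nat). f ((i + 1) mod L)) = (\<Sum>i<L. f i :: real)"
proof (cases L)
  case (Suc m)
  have "(\<Sum>i<Suc m. f ((i + 1) mod Suc m)) = (\<Sum>i<m. f (Suc i)) + f 0"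
    by (simp add: sum.lessThan_Suc)
  also have "\<dots> = (\<Sum>i<Suc m. f i)"
    by (subst sum.lessThan_Suc_shift) simp
  finally show ?thesis using Suc by simp
qed simp

locale graph_cycle =
  fixes N :: nat and vs :: "nat list"
  assumes is_cycle: "is_cycle N vs"
begin

abbreviation "L \<equiv> length vs"

definition succ :: "nat \<Rightarrow> nat" where
  "succ i = vs ! ((i + 1) mod L)"

lemma length_ge_3: "L \<ge> 3" and distinct: "distinct vs" and nodes_less: "set vs \<subseteq> {0..<N}"
  using is_cycle unfolding is_cycle_def by auto

lemma length_pos: "0 < L"
  using length_ge_3 by linarith

lemma mod_length_less: "n mod L < L"
  using length_pos by simp

lemma nth_less: "i < L \<Longrightarrow> vs ! i < N"
  using nodes_less nth_mem by fastforce

lemma succ_less: "succ i < N"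
  unfolding succ_def by (intro nth_less mod_length_less)

lemma nth_eq_iff: "i < L \<Longrightarrow> j < L \<Longrightarrow> vs ! i = vs ! j \<longleftrightarrow> i = j"
  using distinct nth_eq_iff_index_eq by blast

lemma mod_add_neq:
  assumes "i < L" "0 < d" "d < L"
  shows "(i + d) mod L \<noteq> i"
proof (cases "i + d < L")
  case False
  then have "(i + d) mod L = i + d - L"
    using assms by (simp add: le_mod_geq)
  then show ?thesis using assms False by linarith
qed (use assms in simp)

lemma succ_neq: "i < L \<Longrightarrow> succ i \<noteq> vs ! i"
  unfolding succ_def using length_ge_3 mod_add_neq[of i 1] by (simp add: nth_eq_iff mod_length_less)

lemma not_traversed_both_ways:
  assumes "i < L" "j < L" "vs ! i = succ j" "succ i = vs ! j"
  shows False
proof -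
  have "i = (j + 1) mod L" "(i + 1) mod L = j"
    using assms unfolding succ_def by (simp_all add: nth_eq_iff mod_length_less)
  then have "(j + 2) mod L = j" by (simp add: mod_Suc_eq)
  then show False using mod_add_neq[of j 2] assms(2) length_ge_3 by simp
qed

lemma sum_traversed_forward:
  "(\<Sum>i<L. if (vs ! i, succ i) = e then 1 else 0) = (if \<exists>i<L. (vs ! i, succ i) = e then 1 else 0 :: real)"
proof (cases "\<exists>i<L. (vs ! i, succ i) = e")
  case True
  then obtain i0 where i0: "i0 < L" "(vs ! i0, succ i0) = e" by blast
  have "(\<Sum>i<L. if (vs ! i, succ i) = e then 1 else 0) = (\<Sum>i<L. if i = i0 then 1 else 0 :: real)"
    by (rule sum.cong) (use i0 nth_eq_iff in auto)
  then show ?thesis using True i0 by simp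
qed auto

lemma sum_traversed_backward:
  "(\<Sum>i<L. if (succ i, vs ! i) = e then 1 else 0) = (if \<exists>i<L. (succ i, vs ! i) = e then 1 else 0 :: real)"
proof (cases "\<exists>i<L. (succ i, vs ! i) = e")
  case True
  then obtain i0 where i0: "i0 < L" "(succ i0, vs ! i0) = e" by blast
  have "(\<Sum>i<L. if (succ i, vs ! i) = e then 1 else 0) = (\<Sum>i<L. if i = i0 then 1 else 0 :: real)"
    by (rule sum.cong) (use i0 nth_eq_iff in auto)
  then show ?thesis using True i0 by simp
qed auto

lemma cyc_sign_eq_sum:
  "cyc_sign N vs k = (\<Sum>i<L. (if (vs ! i, succ i) = edges N ! k then 1 else 0)
                            - (if (succ i, vs ! i) = edges N ! k then 1 else 0))"
proof -
  have "cyc_sign N vs k = (if \<exists>i<L. (vs ! i, succ i) = edges N ! k then 1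
      else if \<exists>i<L. (succ i, vs ! i) = edges N ! k then -1 else 0)"
    unfolding cyc_sign_def succ_def ..
  moreover have "\<not> ((\<exists>i<L. (vs ! i, succ i) = edges N ! k) \<and> (\<exists>j<L. (succ j, vs ! j) = edges N ! k))"
    by (metis not_traversed_both_ways prod.inject)
  ultimately show ?thesis
    unfolding sum_subtractf sum_traversed_forward sum_traversed_backward by auto
qed

lemma sum_cyc_sign_mult_diff:
  "(\<Sum>k<nE N. cyc_sign N vs k * (\<phi> (snd (edges N ! k)) - \<phi> (fst (edges N ! k)))) = 0"
proof -
  let ?d = "\<lambda>e. \<phi> (snd e) - \<phi> (fst e)"
  have along: "(\<Sum>k<nE N. if (vs ! i, succ i) = edges N ! k then ?d (edges N ! k) else 0)
      - (\<Sum>k<nE N. if (succ i, vs ! i) = edges N ! k then ?d (edges N ! k) else 0)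
      = \<phi> (succ i) - \<phi> (vs ! i)" if "i < L" for i
    using sum_edges_delta[where N=N and e="(vs ! i, succ i)" and G="?d"]
      sum_edges_delta[where N=N and e="(succ i, vs ! i)" and G="?d"]
      nth_less[OF that] succ_less[of i] succ_neq[OF that]
    unfolding eq_commute[of "(_, _)" "edges N ! _"] by auto
  have "(\<Sum>k<nE N. cyc_sign N vs k * ?d (edges N ! k))
     = (\<Sum>i<L. (\<Sum>k<nE N. if (vs ! i, succ i) = edges N ! k then ?d (edges N ! k) else 0)
              - (\<Sum>k<nE N. if (succ i, vs ! i) = edges N ! k then ?d (edges N ! k) else 0))"
    unfolding cyc_sign_eq_sum sum_distrib_right sum_subtractf[symmetric]
    by (subst sum.swap) (auto intro!: sum.cong simp: left_diff_distrib)
  also have "\<dots> = (\<Sum>i<L. \<phi> (succ i) - \<phi> (vs ! i))"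
    using along by simp
  also have "\<dots> = 0"
    unfolding sum_subtractf succ_def using sum_lessThan_rotate[of "\<lambda>j. \<phi> (vs ! j)" L] by simp
  finally show ?thesis .
qed

end

lemma first_repetition:
  fixes v :: "nat \<Rightarrow> nat"
  assumes "\<And>i. v i < N"
  obtains i j where "i < j" "v i = v j" "inj_on v {i..<j}"
proof -
  have "\<not> inj_on v {..N}"
  proof
    assume "inj_on v {..N}"
    then have "card {..N} \<le> card {..<N}"
      using assms by (intro card_inj_on_le) auto
    then show False by simp
  qed
  then have "\<exists>j. \<exists>i<j. v i = v j"
    unfolding inj_on_def by (metis linorder_neqE_nat)
  define j where "j = (LEAST j. \<exists>i<j. v i = v j)"
  obtain i where "i < j" "v i = v j"
    using LeastI_ex[OF \<open>\<exists>j. \<exists>i<j. v i = v j\<close>] unfolding j_def by blast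
  moreover have "inj_on v {i..<j}"
  proof (rule inj_onI, rule ccontr)
    have no_repetition: "\<not> (\<exists>i'<b. v i' = v b)" if "b < j" for b
      using not_less_Least[of b] that unfolding j_def by blast
    fix a b assume "a \<in> {i..<j}" "b \<in> {i..<j}" "v a = v b" "a \<noteq> b"
    then consider "a < b" "b < j" | "b < a" "a < j" by fastforce
    then show False
      by cases (use no_repetition \<open>v a = v b\<close> in \<open>metis\<close>)+
  qed
  ultimately show thesis using that by blast
qed

locale circulation =
  fixes N :: nat and r :: "nat \<Rightarrow> real"
  assumes is_circulation: "is_circulation N r"
begin

definition support :: "nat set" where
  "support = {k. k < nE N \<and> r k \<noteq> 0}"

definition adj :: "nat \<Rightarrow> nat \<Rightarrow> bool" where
  "adj u v \<longleftrightarrow> (\<exists>k\<in>support. edges N ! k = (u, v) \<or> edges N ! k = (v, u))"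

lemma adj_less_neq: "adj u v \<Longrightarrow> u < N \<and> v < N \<and> u \<noteq> v"
  unfolding adj_def support_def using edges_nth_less by fastforce

text \<open>Conservation at u: the support cannot meet u in a single spring.\<close>
lemma adj_extend:
  assumes "adj p u"
  shows "\<exists>w. adj u w \<and> w \<noteq> p"
proof (rule ccontr)
  assume no_other: "\<not> (\<exists>w. adj u w \<and> w \<noteq> p)"
  obtain k1 where k1: "k1 \<in> support" "edges N ! k1 = (p, u) \<or> edges N ! k1 = (u, p)"
    using assms unfolding adj_def by blast
  have k1_less: "k1 < nE N" and "r k1 \<noteq> 0" using k1(1) unfolding support_def by auto
  have "p \<noteq> u" using adj_less_neq[OF assms] by simp
  let ?inc = "\<lambda>k. (if snd (edges N ! k) = u then 1 else 0) - (if fst (edges N ! k) = u then 1 else 0 :: real)"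
  have only_k1: "r k * ?inc k = 0" if "k < nE N" "k \<noteq> k1" for k
  proof (cases "k \<in> support")
    case True
    have "\<not> (snd (edges N ! k) = u \<or> fst (edges N ! k) = u)"
    proof
      assume "snd (edges N ! k) = u \<or> fst (edges N ! k) = u"
      then obtain w where w: "edges N ! k = (u, w) \<or> edges N ! k = (w, u)"
        by (metis prod.collapse)
      then have "w = p" using True no_other unfolding adj_def by auto
      then show False using edges_nth_eq_unordered[OF that(1) k1_less] w k1(2) that(2) by auto
    qed
    then show ?thesis by simp
  qed (use that in \<open>simp add: support_def\<close>)
  have "(\<Sum>k<nE N. r k * ?inc k) = 0"
    using is_circulation unfolding is_circulation_def
    by (auto dest: spec[of _ "\<lambda>z. if z = u then 1 else 0"])
  moreover have "(\<Sum>k<nE N. r k * ?inc k) = r k1 * ?inc k1"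
    by (rule sum.mono_neutral_cong_right[where S="{k1}", simplified]) (use k1_less only_k1 in auto)
  moreover have "?inc k1 \<noteq> 0" using k1(2) \<open>p \<noteq> u\<close> edges_nth_less[OF k1_less] by auto
  ultimately show False using \<open>r k1 \<noteq> 0\<close> by simp
qed

lemma nonbacktracking_walk:
  assumes "adj a b"
  obtains v where "\<And>i. adj (v i) (v (Suc i))" "\<And>i. v (Suc (Suc i)) \<noteq> v i"
proof -
  define step where "step = (\<lambda>(p, u). (u, SOME w. adj u w \<and> w \<noteq> p))"
  define pairs where "pairs i = (step ^^ i) (a, b)" for i
  have pairs_Suc: "pairs (Suc i) = (snd (pairs i), SOME w. adj (snd (pairs i)) w \<and> w \<noteq> fst (pairs i))" for i
    unfolding pairs_def step_def by (simp add: case_prod_beta)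
  have adj_pairs: "adj (fst (pairs i)) (snd (pairs i))" for i
  proof (induction i)
    case 0
    then show ?case using assms unfolding pairs_def by simp
  next
    case (Suc i)
    show ?case unfolding pairs_Suc using someI_ex[OF adj_extend[OF Suc]] by simp
  qed
  have "adj (fst (pairs i)) (fst (pairs (Suc i)))" "fst (pairs (Suc (Suc i))) \<noteq> fst (pairs i)" for i
    using adj_pairs[of i] someI_ex[OF adj_extend[OF adj_pairs[of i]]] unfolding pairs_Suc by simp_all
  then show thesis by (intro that[of "\<lambda>i. fst (pairs i)"])
qed

lemma support_contains_cycle:
  assumes "k < nE N" "r k \<noteq> 0"
  shows "\<exists>vs. is_cycle N vs \<and> cyc_edges N vs \<subseteq> support"
proof -
  obtain a b where "edges N ! k = (a, b)" by (cases "edges N ! k")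
  then have "adj a b" unfolding adj_def support_def using assms by auto
  then obtain v where walk: "\<And>i. adj (v i) (v (Suc i))" and nonback: "\<And>i. v (Suc (Suc i)) \<noteq> v i"
    by (metis nonbacktracking_walk)
  obtain i j where ij: "i < j" "v i = v j" and inj: "inj_on v {i..<j}"
    using first_repetition[of v N] adj_less_neq[OF walk] by blast
  define vs where "vs = map v [i..<j]"
  have vs_nth: "l < j - i \<Longrightarrow> vs ! l = v (i + l)" for l unfolding vs_def by simp
  have "j \<noteq> Suc i" using ij adj_less_neq[OF walk[of i]] by auto
  moreover have "j \<noteq> Suc (Suc i)" using ij nonback[of i] by auto
  ultimately have "length vs \<ge> 3" using ij unfolding vs_def by simp
  then have cycle: "is_cycle N vs"
    unfolding is_cycle_def vs_def using inj adj_less_neq[OF walk] by (auto simp: distinct_map)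
  have vs_succ: "vs ! ((l + 1) mod length vs) = v (Suc (i + l))" if "l < length vs" for l
  proof (cases "l + 1 < length vs")
    case False
    then have "l + 1 = length vs" using that by simp
    then have "(l + 1) mod length vs = 0" "Suc (i + l) = j" using ij unfolding vs_def by auto
    then show ?thesis using vs_nth[of 0] ij by (simp add: vs_def)
  qed (use vs_nth in \<open>simp add: vs_def\<close>)
  have "cyc_edges N vs \<subseteq> support"
  proof
    fix k assume "k \<in> cyc_edges N vs"
    then have k: "k < nE N" "cyc_sign N vs k \<noteq> 0" unfolding cyc_edges_def by auto
    then obtain l where l: "l < length vs"
      "edges N ! k = (v (i + l), v (Suc (i + l))) \<or> edges N ! k = (v (Suc (i + l)), v (i + l))"
      unfolding cyc_sign_def using vs_succ vs_nth by (auto split: if_splits simp: vs_def)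
    obtain k' where "k' \<in> support"
      "edges N ! k' = (v (i + l), v (Suc (i + l))) \<or> edges N ! k' = (v (Suc (i + l)), v (i + l))"
      using walk[of "i + l"] unfolding adj_def by blast
    then show "k \<in> support"
      using edges_nth_eq_unordered[OF k(1) _ l(2)] unfolding support_def by auto
  qed
  then show ?thesis using cycle by blast
qed

end

lemma circulation_supported_on_forest_eq_0:
  assumes "is_circulation N r" and "\<And>k. k < nE N \<Longrightarrow> r k \<noteq> 0 \<Longrightarrow> k \<in> T"
    and "\<not> (\<exists>vs. is_cycle N vs \<and> cyc_edges N vs \<subseteq> T)" and "k < nE N"
  shows "r k = 0"
proof (rule ccontr)
  interpret circulation N r by (rule circulation.intro) fact
  assume "r k \<noteq> 0"
  then obtain vs where "is_cycle N vs" "cyc_edges N vs \<subseteq> support"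
    using support_contains_cycle assms(4) by blast
  moreover have "support \<subseteq> T" using assms(2) unfolding support_def by auto
  ultimately show False using assms(3) by blast
qed

section \<open>The cycle projection\<close>

lemma mult_mat_vec_nth:
  "A \<in> carrier_mat nr nc \<Longrightarrow> v \<in> carrier_vec nc \<Longrightarrow> i < nr \<Longrightarrow>
   (A *\<^sub>v v) $ i = (\<Sum>j<nc. A $$ (i, j) * v $ j)"
  by (simp add: scalar_prod_def lessThan_atLeast0)

locale spring_network =
  fixes N :: nat and T :: "nat set" and cyc :: "nat \<Rightarrow> nat list"
  assumes N_ge_3: "N \<ge> 3" and spanning_tree: "spanning_tree N T"
    and fundamental_cycles: "fundamental_cycles N T cyc"
begin

abbreviation "n \<equiv> nE N"
abbreviation "nt \<equiv> nontree N T"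
abbreviation "m \<equiv> length (nontree N T)"
abbreviation "C \<equiv> cycle_mat N T cyc"

lemma C_carrier: "C \<in> carrier_mat m n"
  unfolding cycle_mat_def by simp

lemma C_index: "i < m \<Longrightarrow> k < n \<Longrightarrow> C $$ (i, k) = cyc_sign N (cyc (nt ! i)) k"
  unfolding cycle_mat_def by simp

lemma distinct_nontree: "distinct nt" and set_nontree: "set nt = {0..<n} - T"
  unfolding nontree_def by simp_all

lemma nontree_nth: "i < m \<Longrightarrow> nt ! i < n \<and> nt ! i \<notin> T"
  using nth_mem[of i nt] unfolding set_nontree by auto

lemma fundamental_cycle_nth:
  "i < m \<Longrightarrow> is_cycle N (cyc (nt ! i)) \<and> nt ! i \<in> cyc_edges N (cyc (nt ! i))
     \<and> cyc_edges N (cyc (nt ! i)) \<subseteq> T \<union> {nt ! i}"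
  using fundamental_cycles nontree_nth unfolding fundamental_cycles_def by auto

definition orient :: "nat \<Rightarrow> real" where
  "orient i = cyc_sign N (cyc (nt ! i)) (nt ! i)"

lemma orient_mult_self: "i < m \<Longrightarrow> orient i * orient i = 1"
proof -
  assume "i < m"
  then have "orient i \<noteq> 0" using fundamental_cycle_nth unfolding orient_def cyc_edges_def by auto
  moreover have "orient i \<in> {1, -1, 0}" unfolding orient_def cyc_sign_def by auto
  ultimately show ?thesis by auto
qed

lemma C_nontree_column: "i < m \<Longrightarrow> i' < m \<Longrightarrow> C $$ (i', nt ! i) = (if i' = i then orient i else 0)"
proof -
  assume i: "i < m" and i': "i' < m"
  have "nt ! i \<notin> cyc_edges N (cyc (nt ! i'))" if "i' \<noteq> i"
    using fundamental_cycle_nth[OF i'] nontree_nth[OF i] that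
      nth_eq_iff_index_eq[OF distinct_nontree i i'] by auto
  then show ?thesis
    using C_index[OF i'] nontree_nth[OF i] unfolding cyc_edges_def orient_def by auto
qed

lemma transpose_C_mult_nontree:
  assumes "z \<in> carrier_vec m" "i < m"
  shows "(transpose_mat C *\<^sub>v z) $ (nt ! i) = orient i * z $ i"
proof -
  have "(transpose_mat C *\<^sub>v z) $ (nt ! i) = (\<Sum>i'<m. C $$ (i', nt ! i) * z $ i')"
    using mult_mat_vec_nth[of "transpose_mat C" n m z "nt ! i"] C_carrier assms nontree_nth by simp
  also have "\<dots> = (\<Sum>i'<m. if i' = i then orient i * z $ i else 0)"
    by (rule sum.cong) (use assms(2) in \<open>auto simp: C_nontree_column\<close>)
  also have "\<dots> = orient i * z $ i"
    using assms(2) by simp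
  finally show ?thesis .
qed

lemma transpose_C_mult_nth:
  assumes "y \<in> carrier_vec m" "k < n"
  shows "(transpose_mat C *\<^sub>v y) $ k = (\<Sum>i<m. y $ i * cyc_sign N (cyc (nt ! i)) k)"
  using mult_mat_vec_nth[of "transpose_mat C" n m y k] C_carrier assms
  by (auto intro!: sum.cong simp: C_index mult.commute)

lemma is_circulation_transpose_C_mult:
  assumes y: "y \<in> carrier_vec m"
  shows "is_circulation N (\<lambda>k. (transpose_mat C *\<^sub>v y) $ k)"
  unfolding is_circulation_def
proof
  fix \<phi> :: "nat \<Rightarrow> real"
  let ?d = "\<lambda>k. \<phi> (snd (edges N ! k)) - \<phi> (fst (edges N ! k))"
  have "(\<Sum>k<n. (transpose_mat C *\<^sub>v y) $ k * ?d k)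
      = (\<Sum>k<n. \<Sum>i<m. y $ i * (cyc_sign N (cyc (nt ! i)) k * ?d k))"
    by (rule sum.cong) (simp_all add: transpose_C_mult_nth[OF y] sum_distrib_right mult.assoc)
  also have "\<dots> = (\<Sum>i<m. y $ i * (\<Sum>k<n. cyc_sign N (cyc (nt ! i)) k * ?d k))"
    by (subst sum.swap) (simp add: sum_distrib_left)
  also have "\<dots> = 0"
    using fundamental_cycle_nth graph_cycle.sum_cyc_sign_mult_diff graph_cycle.intro by simp
  finally show "(\<Sum>k<n. (transpose_mat C *\<^sub>v y) $ k * ?d k) = 0" .
qed

lemma C_mult_gradient_part: "C *\<^sub>v gradient_part N v = 0\<^sub>v m"
proof (rule eq_vecI)
  fix i assume "i < dim_vec (0\<^sub>v m :: real vec)"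
  then have i: "i < m" by simp
  define \<phi> where "\<phi> u = divergence N v u / real N" for u
  have "(C *\<^sub>v gradient_part N v) $ i = (\<Sum>k<n. C $$ (i, k) * gradient_part N v $ k)"
    by (rule mult_mat_vec_nth) (use C_carrier i in \<open>auto simp: gradient_part_def\<close>)
  also have "\<dots> = (\<Sum>k<n. cyc_sign N (cyc (nt ! i)) k * (\<phi> (snd (edges N ! k)) - \<phi> (fst (edges N ! k))))"
    by (rule sum.cong) (auto simp: C_index[OF i] gradient_part_def \<phi>_def diff_divide_distrib)
  also have "\<dots> = 0"
    using fundamental_cycle_nth[OF i] graph_cycle.sum_cyc_sign_mult_diff graph_cycle.intro by blast
  finally show "(C *\<^sub>v gradient_part N v) $ i = 0\<^sub>v m $ i" using i by simp
qed (use C_carrier in simp)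

definition nontree_coords :: "real vec \<Rightarrow> real vec" where
  "nontree_coords w = vec m (\<lambda>i. orient i * w $ (nt ! i))"

text \<open>A circulation is determined by its values on the non-tree springs: subtracting the
  matching combination of fundamental cycles leaves a circulation supported on the tree.\<close>
lemma transpose_C_mult_nontree_coords:
  assumes w: "w \<in> carrier_vec n" and circ: "is_circulation N (\<lambda>k. w $ k)"
  shows "transpose_mat C *\<^sub>v nontree_coords w = w"
proof -
  have y: "nontree_coords w \<in> carrier_vec m" unfolding nontree_coords_def by simp
  define r where "r k = w $ k - (transpose_mat C *\<^sub>v nontree_coords w) $ k" for k
  have "is_circulation N r"
    using circ is_circulation_transpose_C_mult[OF y]
    unfolding is_circulation_def r_def by (simp add: left_diff_distrib sum_subtractf)
  moreover have "k \<in> T" if "k < n" "r k \<noteq> 0" for k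
  proof (rule ccontr)
    assume "k \<notin> T"
    then have "k \<in> set nt" using that(1) unfolding set_nontree by simp
    then obtain i where i: "i < m" "nt ! i = k" by (auto simp: in_set_conv_nth)
    then have "r k = 0"
      using transpose_C_mult_nontree[OF y i(1)] orient_mult_self[OF i(1)]
      unfolding r_def nontree_coords_def by (simp add: mult.assoc[symmetric])
    then show False using that by simp
  qed
  moreover have "\<not> (\<exists>vs. is_cycle N vs \<and> cyc_edges N vs \<subseteq> T)"
    using spanning_tree unfolding spanning_tree_def by auto
  ultimately have "r k = 0" if "k < n" for k
    using circulation_supported_on_forest_eq_0 that by blast
  then show ?thesis
    by (intro eq_vecI) (use w y C_carrier in \<open>auto simp: r_def\<close>)
qed

lemma C_mult_transpose_injective:
  assumes z: "z \<in> carrier_vec m" and "(C * transpose_mat C) *\<^sub>v z = 0\<^sub>v m"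
  shows "z = 0\<^sub>v m"
proof -
  define t where "t = transpose_mat C *\<^sub>v z"
  have t: "t \<in> carrier_vec n" unfolding t_def using C_carrier z by simp
  have CT: "transpose_mat C \<in> carrier_mat n m" using C_carrier by simp
  have "t \<bullet> t = z \<bullet> (C *\<^sub>v t)"
    unfolding t_def by (rule transpose_vec_mult_scalar[OF C_carrier _ z]) (use t in \<open>simp add: t_def\<close>)
  also have "C *\<^sub>v t = 0\<^sub>v m"
    unfolding t_def assoc_mult_mat_vec[OF C_carrier CT z, symmetric] by fact
  finally have "(\<Sum>k\<in>{0..<n}. t $ k * t $ k) = 0"
    using t z unfolding scalar_prod_def by simp
  then have "t $ k * t $ k = 0" if "k < n" for k
    using that sum_nonneg_eq_0_iff[of "{0..<n}" "\<lambda>k. t $ k * t $ k"] by simp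
  then have t_0: "t $ k = 0" if "k < n" for k
    using that by simp
  show ?thesis
  proof (rule eq_vecI)
    fix i assume "i < dim_vec (0\<^sub>v m :: real vec)"
    then have i: "i < m" by simp
    have "orient i * (orient i * z $ i) = 0"
      using transpose_C_mult_nontree[OF z i] t_0[of "nt ! i"] nontree_nth[OF i] unfolding t_def by simp
    then show "z $ i = 0\<^sub>v m $ i" using orient_mult_self[OF i] i by (simp add: mult.assoc[symmetric])
  qed (use z in simp)
qed

lemma mat_inverse_C_mult_transpose:
  obtains M where "mat_inverse (C * transpose_mat C) = Some M"
    "M * (C * transpose_mat C) = 1\<^sub>m m" "M \<in> carrier_mat m m"
proof -
  have A: "C * transpose_mat C \<in> carrier_mat m m" using C_carrier by simp
  have "Determinant.det (C * transpose_mat C) \<noteq> 0"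
    unfolding det_0_iff_vec_prod_zero_field[OF A] using C_mult_transpose_injective by blast
  then have "C * transpose_mat C \<in> Units (ring_mat TYPE(real) m undefined)"
    by (rule det_non_zero_imp_unit[OF A])
  then obtain M where "mat_inverse (C * transpose_mat C) = Some M"
    using mat_inverse(1)[OF A, of undefined] by (cases "mat_inverse (C * transpose_mat C)") auto
  then show thesis using that mat_inverse(2)[OF A] by blast
qed

lemma cycle_projection:
  assumes v: "v \<in> carrier_vec n"
  shows "(transpose_mat C * the (mat_inverse (C * transpose_mat C)) * C) *\<^sub>v v = v - gradient_part N v"
proof -
  obtain M where M: "mat_inverse (C * transpose_mat C) = Some M" "M * (C * transpose_mat C) = 1\<^sub>m m"
    "M \<in> carrier_mat m m" by (rule mat_inverse_C_mult_transpose)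
  define w where "w = v - gradient_part N v"
  have g: "gradient_part N v \<in> carrier_vec n" unfolding gradient_part_def by simp
  have w: "w \<in> carrier_vec n" using v unfolding w_def gradient_part_def by simp
  have y: "nontree_coords w \<in> carrier_vec m" unfolding nontree_coords_def by simp
  have CT: "transpose_mat C \<in> carrier_mat n m" using C_carrier by simp
  have w_eq: "transpose_mat C *\<^sub>v nontree_coords w = w"
    by (rule transpose_C_mult_nontree_coords[OF w])
      (use is_circulation_diff_gradient_part[of N v] N_ge_3 v in \<open>simp add: w_def\<close>)
  have "v = w + gradient_part N v"
    unfolding w_def using v g by (intro eq_vecI) auto
  then have "C *\<^sub>v v = C *\<^sub>v (w + gradient_part N v)"
    by (rule arg_cong)
  also have "\<dots> = C *\<^sub>v w"
    unfolding mult_add_distrib_mat_vec[OF C_carrier w g] C_mult_gradient_part using C_carrier w by simp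
  also have "\<dots> = (C * transpose_mat C) *\<^sub>v nontree_coords w"
    unfolding assoc_mult_mat_vec[OF C_carrier CT y] w_eq ..
  finally have "M *\<^sub>v (C *\<^sub>v v) = (M * (C * transpose_mat C)) *\<^sub>v nontree_coords w"
    using assoc_mult_mat_vec[OF M(3) _ y, of "C * transpose_mat C"] C_carrier by simp
  also have "\<dots> = nontree_coords w"
    unfolding M(2) using y by simp
  finally have "(transpose_mat C * M * C) *\<^sub>v v = transpose_mat C *\<^sub>v nontree_coords w"
    using assoc_mult_mat_vec[OF mult_carrier_mat[OF CT M(3)] C_carrier v]
      assoc_mult_mat_vec[OF CT M(3)] C_carrier v by simp
  then have "(transpose_mat C * M * C) *\<^sub>v v = w"
    unfolding w_eq .
  then show ?thesis unfolding M(1) w_def by simp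
qed

end

section \<open>The relaxation through third nodes\<close>

lemma lbar_nth: "k < nE N \<Longrightarrow> lbar N x $ k = crep (x (snd (edges N ! k)) - x (fst (edges N ! k)))"
  unfolding lbar_def by simp

lemma divergence_lbar_in_out:
  assumes "u < N"
  shows "divergence N (lbar N x) u = (\<Sum>a<u. crep (x u - x a)) - (\<Sum>b\<in>{u<..<N}. crep (x b - x u))"
proof -
  let ?f = "\<lambda>a b. crep (x b - x a)"
  have "divergence N (lbar N x) u =
      (\<Sum>b<N. \<Sum>a<b. ?f a b * ((if b = u then 1 else 0) - (if a = u then 1 else 0)))"
    unfolding divergence_def incidence_def
    using sum_edges_pairs[where N=N and G="\<lambda>e. ?f (fst e) (snd e) *
        ((if snd e = u then 1 else 0) - (if fst e = u then 1 else 0))"]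
    by (simp add: lbar_nth)
  also have "\<dots> = (\<Sum>b<N. \<Sum>a<b. if b = u then ?f a b else 0) - (\<Sum>b<N. \<Sum>a<b. if a = u then ?f a b else 0)"
    unfolding sum_subtractf[symmetric] by (intro sum.cong) auto
  also have "(\<Sum>b<N. \<Sum>a<b. if b = u then ?f a b else 0) = (\<Sum>b<N. if b = u then \<Sum>a<b. ?f a b else 0)"
    by (rule sum.cong) auto
  also have "\<dots> = (\<Sum>a<u. ?f a u)"
    using assms by simp
  also have "(\<Sum>b<N. \<Sum>a<b. if a = u then ?f a b else 0) = (\<Sum>b<N. if u < b then ?f u b else 0)"
    by (rule sum.cong) (simp_all add: sum.delta)
  also have "\<dots> = (\<Sum>b\<in>{u<..<N}. ?f u b)"
    by (simp add: sum.If_cases) (rule sum.cong, auto)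
  finally show ?thesis .
qed

lemma divergence_lbar:
  assumes "u < N"
  shows "divergence N (lbar N x) u = (\<Sum>c\<in>{0..<N} - {u}. spring_len (c < u) (x u) (x c))"
proof -
  have split: "{0..<N} - {u} = {..<u} \<union> {u<..<N}" using assms by auto
  have "(\<Sum>c\<in>{0..<N} - {u}. spring_len (c < u) (x u) (x c)) =
      (\<Sum>c<u. spring_len (c < u) (x u) (x c)) + (\<Sum>c\<in>{u<..<N}. spring_len (c < u) (x u) (x c))"
    unfolding split by (rule sum.union_disjoint) auto
  also have "(\<Sum>c<u. spring_len (c < u) (x u) (x c)) = (\<Sum>a<u. crep (x u - x a))"
    by (rule sum.cong) (simp_all add: spring_len_def)
  also have "(\<Sum>c\<in>{u<..<N}. spring_len (c < u) (x u) (x c)) = - (\<Sum>b\<in>{u<..<N}. crep (x b - x u))"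
    by (simp add: spring_len_def sum_negf[symmetric])
  finally show ?thesis using divergence_lbar_in_out[OF assms] by simp
qed

definition third_node_term :: "nat \<Rightarrow> nat \<Rightarrow> nat \<Rightarrow> (nat \<Rightarrow> real) \<Rightarrow> real" where
  "third_node_term a b c x = spring_len (c < b) (x b) (x c) - spring_len (c < a) (x a) (x c)"

lemma divergence_lbar_diff:
  assumes "a < b" "b < N"
  shows "divergence N (lbar N x) b - divergence N (lbar N x) a =
    2 * crep (x b - x a) + (\<Sum>c\<in>{0..<N} - {a, b}. third_node_term a b c x)"
proof -
  have "divergence N (lbar N x) b =
      spring_len True (x b) (x a) + (\<Sum>c\<in>{0..<N} - {a, b}. spring_len (c < b) (x b) (x c))"
  proof -
    have split: "{0..<N} - {b} = insert a ({0..<N} - {a, b})" using assms by auto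
    show ?thesis unfolding divergence_lbar[OF assms(2)] split using assms by (subst sum.insert) auto
  qed
  moreover have "divergence N (lbar N x) a =
      spring_len False (x a) (x b) + (\<Sum>c\<in>{0..<N} - {a, b}. spring_len (c < a) (x a) (x c))"
  proof -
    have split: "{0..<N} - {a} = insert b ({0..<N} - {a, b})" using assms by auto
    have "a < N" using assms by simp
    show ?thesis unfolding divergence_lbar[OF \<open>a < N\<close>] split using assms by (subst sum.insert) auto
  qed
  ultimately show ?thesis
    unfolding third_node_term_def sum_subtractf by (simp add: spring_len_def)
qed

lemma third_node_term_measurable[measurable]:
  "a < N \<Longrightarrow> b < N \<Longrightarrow> c < N \<Longrightarrow> third_node_term a b c \<in> borel_measurable (pos_space N)"
  unfolding third_node_term_def by measurable

lemma abs_third_node_term_le: "\<bar>third_node_term a b c x\<bar> \<le> 1"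
  unfolding third_node_term_def
  using abs_spring_len_le[of "c < b" "x b" "x c"] abs_spring_len_le[of "c < a" "x a" "x c"] by linarith

lemma abs_sum_third_node_terms_le:
  assumes "a < b" "b < N"
  shows "\<bar>\<Sum>c\<in>{0..<N} - {a, b}. third_node_term a b c x\<bar> \<le> real N - 2"
proof -
  have "\<bar>\<Sum>c\<in>{0..<N} - {a, b}. third_node_term a b c x\<bar> \<le> (\<Sum>c\<in>{0..<N} - {a, b}. 1)"
    by (rule order_trans[OF sum_abs sum_mono]) (rule abs_third_node_term_le)
  also have "\<dots> = real N - 2"
    using assms by (simp add: card_Diff_subset of_nat_diff)
  finally show ?thesis .
qed

lemma third_node_term_upd:
  "d \<noteq> c \<Longrightarrow> d \<noteq> a \<Longrightarrow> d \<noteq> b \<Longrightarrow> third_node_term a b c (x(d := y)) = third_node_term a b c x"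
  unfolding third_node_term_def by simp

text \<open>Given the positions of a and b, the terms of the other nodes are independent,
  centred, and of variance |Y| - Y^2, where Y = crep (x b - x a).\<close>
lemma integral_indicator_third_node_term:
  assumes ab: "a < b" "b < N" and [measurable]: "B \<in> sets borel"
    and cd: "c \<in> {0..<N} - {a, b}" "d \<in> {0..<N} - {a, b}"
  defines "I \<equiv> \<lambda>x. indicator B (crep (x b - x a)) :: real"
  shows "(\<integral>x. I x * third_node_term a b c x \<partial>pos_space N) = 0"
    "(\<integral>x. I x * (third_node_term a b c x * third_node_term a b d x) \<partial>pos_space N) =
      (if c = d then (\<integral>x. I x * (\<bar>crep (x b - x a)\<bar> - (crep (x b - x a))\<^sup>2) \<partial>pos_space N) else 0)"
proof -
  have "a < N" using ab by simp
  have I_measurable[measurable]: "I \<in> borel_measurable (pos_space N)"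
    unfolding I_def using ab \<open>a < N\<close> by measurable
  have I_bounded: "\<bar>I x\<bar> \<le> 1" for x by (simp add: I_def indicator_def)
  have I_upd: "I (x(c := y)) = I x" for x y
    using cd by (auto simp: I_def)
  show "(\<integral>x. I x * third_node_term a b c x \<partial>pos_space N) = 0"
    using integral_spring_len_diff_pos_space(1)[of a N b c I 1, of "c < b" "c < a"] cd ab I_bounded I_upd
    unfolding third_node_term_def by auto
  show "(\<integral>x. I x * (third_node_term a b c x * third_node_term a b d x) \<partial>pos_space N) =
      (if c = d then (\<integral>x. I x * (\<bar>crep (x b - x a)\<bar> - (crep (x b - x a))\<^sup>2) \<partial>pos_space N) else 0)"
  proof (cases "c = d")
    case True
    then show ?thesis
      using integral_spring_len_diff_pos_space(2)[of a N b c I 1, of "c < b" "c < a"] cd ab I_bounded I_upd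
      unfolding third_node_term_def by (auto simp: power2_eq_square)
  next
    case False
    have "(\<lambda>x. I x * third_node_term a b d x) \<in> borel_measurable (pos_space N)"
      using cd ab by (intro borel_measurable_times I_measurable third_node_term_measurable) auto
    moreover have "\<bar>I x * third_node_term a b d x\<bar> \<le> 1" for x
      using abs_third_node_term_le[of a b d x] by (auto simp: I_def indicator_def)
    moreover have "I (x(c := y)) * third_node_term a b d (x(c := y)) = I x * third_node_term a b d x" for x y
      using cd False by (simp add: I_upd third_node_term_upd)
    ultimately show ?thesis
      using integral_spring_len_diff_pos_space(1)[of a N b c "\<lambda>x. I x * third_node_term a b d x" 1,
          of "c < b" "c < a"] cd ab False
      unfolding third_node_term_def by (auto simp: algebra_simps)
  qed
qed

lemma integral_sum_third_node_terms:
  assumes ab: "a < b" "b < N" and [measurable]: "B \<in> sets borel"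
  defines "I \<equiv> \<lambda>x. indicator B (crep (x b - x a)) :: real"
    and "S \<equiv> \<lambda>x. \<Sum>c\<in>{0..<N} - {a, b}. third_node_term a b c x"
  shows "(\<integral>x. I x * S x \<partial>pos_space N) = 0"
    "(\<integral>x. I x * (S x)\<^sup>2 \<partial>pos_space N) =
     (real N - 2) * (\<integral>x. I x * (\<bar>crep (x b - x a)\<bar> - (crep (x b - x a))\<^sup>2) \<partial>pos_space N)"
proof -
  let ?C = "{0..<N} - {a, b}"
  have "a < N" using ab by simp
  have [measurable]: "I \<in> borel_measurable (pos_space N)"
    unfolding I_def using ab \<open>a < N\<close> by measurable
  have I_bounded: "\<bar>I x\<bar> \<le> 1" for x by (simp add: I_def indicator_def)
  have integrable: "integrable (pos_space N) (\<lambda>x. I x * F x)"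
    if "F \<in> borel_measurable (pos_space N)" "\<And>x. \<bar>F x\<bar> \<le> 1" for F
    by (rule integrable_bounded_prob[OF prob_space_pos_space, where K=1])
      (use that I_bounded in \<open>auto simp: abs_mult intro: mult_le_one\<close>)
  have mean_0: "(\<integral>x. I x * third_node_term a b c x \<partial>pos_space N) = 0" if "c \<in> ?C" for c
    using integral_indicator_third_node_term(1)[OF ab \<open>B \<in> sets borel\<close> that that] by (simp add: I_def)
  have products: "(\<integral>x. I x * (third_node_term a b c x * third_node_term a b d x) \<partial>pos_space N) =
      (if c = d then (\<integral>x. I x * (\<bar>crep (x b - x a)\<bar> - (crep (x b - x a))\<^sup>2) \<partial>pos_space N) else 0)"
    if "c \<in> ?C" "d \<in> ?C" for c d
    using integral_indicator_third_node_term(2)[OF ab \<open>B \<in> sets borel\<close> that] by (simp add: I_def)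
  show "(\<integral>x. I x * S x \<partial>pos_space N) = 0"
    unfolding S_def sum_distrib_left using mean_0 ab
    by (subst Bochner_Integration.integral_sum) (auto intro!: integrable abs_third_node_term_le)
  have product_integrable:
    "integrable (pos_space N) (\<lambda>x. I x * (third_node_term a b c x * third_node_term a b d x))"
    if "c \<in> ?C" "d \<in> ?C" for c d
    using that ab by (intro integrable) (auto simp: abs_mult intro: mult_le_one abs_third_node_term_le)
  have "(\<integral>x. I x * (S x)\<^sup>2 \<partial>pos_space N) =
      (\<integral>x. (\<Sum>c\<in>?C. \<Sum>d\<in>?C. I x * (third_node_term a b c x * third_node_term a b d x)) \<partial>pos_space N)"
    unfolding S_def power2_eq_square sum_product by (simp only: sum_distrib_left)
  also have "\<dots> = (\<Sum>c\<in>?C. \<Sum>d\<in>?C. (\<integral>x. I x * (third_node_term a b c x * third_node_term a b d x) \<partial>pos_space N))"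
    by (subst Bochner_Integration.integral_sum, rule Bochner_Integration.integrable_sum)
      (auto intro!: sum.cong Bochner_Integration.integral_sum product_integrable)
  also have "\<dots> = (\<Sum>c\<in>?C. (\<integral>x. I x * (\<bar>crep (x b - x a)\<bar> - (crep (x b - x a))\<^sup>2) \<partial>pos_space N))"
    using products by (simp add: sum.delta)
  also have "\<dots> = (real N - 2) * (\<integral>x. I x * (\<bar>crep (x b - x a)\<bar> - (crep (x b - x a))\<^sup>2) \<partial>pos_space N)"
    using ab by (simp add: card_Diff_subset of_nat_diff)
  finally show "(\<integral>x. I x * (S x)\<^sup>2 \<partial>pos_space N) =
     (real N - 2) * (\<integral>x. I x * (\<bar>crep (x b - x a)\<bar> - (crep (x b - x a))\<^sup>2) \<partial>pos_space N)" .
qed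

section \<open>Conditional moments of the relaxation\<close>

context spring_network
begin

lemma nE_pos: "0 < n"
proof -
  have "(0, 1) \<in> set (edges N)" unfolding set_edges using N_ge_3 by auto
  then show ?thesis unfolding nE_def by (cases "edges N") auto
qed

lemma dl_eq:
  assumes k: "k < n" and e: "edges N ! k = (a, b)"
  shows "dl N T cyc x k =
    - (2 * crep (x b - x a) + (\<Sum>c\<in>{0..<N} - {a, b}. third_node_term a b c x)) / real N"
proof -
  have lbar: "lbar N x \<in> carrier_vec n" unfolding lbar_def by simp
  have "dl N T cyc x k = - gradient_part N (lbar N x) $ k"
    using k lbar cycle_projection[OF lbar] unfolding dl_def lstar_def Let_def gradient_part_def by simp
  also have "\<dots> = - (divergence N (lbar N x) b - divergence N (lbar N x) a) / real N"
    using k e unfolding gradient_part_def by (simp add: minus_divide_left)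
  finally show ?thesis
    using divergence_lbar_diff[of a b N x] edges_nth_less[OF k] e by simp
qed

lemma edge_nodes:
  assumes "k < n"
  obtains a b where "edges N ! k = (a, b)" "a < b" "b < N"
  using edges_nth_less[OF assms] by (cases "edges N ! k") auto

lemma lbar_nth_measurable[measurable]: "k < n \<Longrightarrow> (\<lambda>x. lbar N x $ k) \<in> borel_measurable (pos_space N)"
  using edges_nth_less[of k N] unfolding lbar_nth
  by (intro measurable_compose[OF _ crep_measurable] borel_measurable_diff pos_space_component_measurable) auto

lemma abs_lbar_nth_le: "k < n \<Longrightarrow> \<bar>lbar N x $ k\<bar> \<le> 1/2"
  using crep_bounds[of "x (snd (edges N ! k)) - x (fst (edges N ! k))"] by (simp add: lbar_nth)

lemma dl_measurable[measurable]:
  assumes "k < n"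
  shows "(\<lambda>x. dl N T cyc x k) \<in> borel_measurable (pos_space N)"
proof -
  obtain a b where e: "edges N ! k = (a, b)" "a < b" "b < N" using edge_nodes[OF assms] .
  show ?thesis
    unfolding dl_eq[OF assms e(1)]
    by (intro borel_measurable_divide borel_measurable_uminus borel_measurable_add borel_measurable_times
        borel_measurable_const borel_measurable_sum third_node_term_measurable borel_measurable_diff
        measurable_compose[OF _ crep_measurable] pos_space_component_measurable) (use e in auto)
qed

lemma abs_dl_le:
  assumes "k < n"
  shows "\<bar>dl N T cyc x k\<bar> \<le> 1"
proof -
  obtain a b where e: "edges N ! k = (a, b)" "a < b" "b < N" using edge_nodes[OF assms] .
  let ?S = "\<Sum>c\<in>{0..<N} - {a, b}. third_node_term a b c x"
  have "\<bar>2 * crep (x b - x a) + ?S\<bar> \<le> real N"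
    using abs_sum_third_node_terms_le[OF e(2,3), of x] crep_bounds[of "x b - x a"] by linarith
  then show ?thesis
    using N_ge_3 by (simp add: dl_eq[OF assms e(1)] abs_divide abs_minus divide_le_eq_1)
qed

lemma abs_cond_mean_le: "\<bar>y\<bar> \<le> 1/2 \<Longrightarrow> \<bar>(real N - 2) / real N * y - y\<bar> \<le> 1"
proof -
  assume y: "\<bar>y\<bar> \<le> 1/2"
  have "(real N - 2) / real N * y - y = - 2 * y / real N"
    using N_ge_3 by (simp add: field_simps)
  then show ?thesis using y N_ge_3 by (simp add: abs_divide abs_mult)
qed

lemma abs_cond_var_le: "\<bar>y\<bar> \<le> 1/2 \<Longrightarrow> \<bar>(real N - 2) / (real N)\<^sup>2 * (\<bar>y\<bar> - y\<^sup>2)\<bar> \<le> 1"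
proof -
  assume y: "\<bar>y\<bar> \<le> 1/2"
  have c: "0 \<le> (real N - 2) / (real N)\<^sup>2" "(real N - 2) / (real N)\<^sup>2 \<le> 1"
    using N_ge_3 by (auto simp: power2_eq_square divide_le_eq_1 intro: order_trans[of _ "real N"])
  have h: "0 \<le> \<bar>y\<bar> - y\<^sup>2" "\<bar>y\<bar> - y\<^sup>2 \<le> 1"
    using abs_minus_square_bounds[of y] y by simp_all
  have "\<bar>(real N - 2) / (real N)\<^sup>2 * (\<bar>y\<bar> - y\<^sup>2)\<bar> \<le> 1 * 1"
    unfolding abs_mult using c h by (intro mult_mono) auto
  then show ?thesis by simp
qed

text \<open>Given lbar_k = Y we have N dl_k = - 2 Y - S, where S is a sum of N - 2 centred terms
  of variance |Y| - Y^2.\<close>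
lemma dl_moments:
  assumes k: "k < n" and [measurable]: "B \<in> sets borel"
  shows "(\<integral>x. indicator B (lbar N x $ k) * dl N T cyc x k \<partial>pos_space N)
       = (\<integral>x. indicator B (lbar N x $ k) * ((real N - 2) / real N * lbar N x $ k - lbar N x $ k) \<partial>pos_space N)"
    "(\<integral>x. indicator B (lbar N x $ k) * (dl N T cyc x k - ((real N - 2) / real N * lbar N x $ k - lbar N x $ k))\<^sup>2 \<partial>pos_space N)
       = (\<integral>x. indicator B (lbar N x $ k) * ((real N - 2) / (real N)\<^sup>2 * (\<bar>lbar N x $ k\<bar> - (lbar N x $ k)\<^sup>2)) \<partial>pos_space N)"
proof -
  obtain a b where e: "edges N ! k = (a, b)" "a < b" "b < N" using edge_nodes[OF k] .
  let ?Y = "\<lambda>x. crep (x b - x a)"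
  let ?I = "\<lambda>x. indicator B (crep (x b - x a)) :: real"
  let ?S = "\<lambda>x. \<Sum>c\<in>{0..<N} - {a, b}. third_node_term a b c x"
  have Y: "lbar N x $ k = ?Y x" for x by (simp add: lbar_nth[OF k] e)
  have dl: "dl N T cyc x k = - (2 * ?Y x + ?S x) / real N" for x by (rule dl_eq[OF k e(1)])
  have N: "0 < real N" using N_ge_3 by simp
  have [measurable]: "?Y \<in> borel_measurable (pos_space N)"
    using lbar_nth_measurable[OF k] unfolding Y .
  have [measurable]: "?S \<in> borel_measurable (pos_space N)"
    by (intro borel_measurable_sum third_node_term_measurable) (use e in auto)
  have "a < N" using e by simp
  have [measurable]: "?I \<in> borel_measurable (pos_space N)"
    using e \<open>a < N\<close> by measurable
  have int_mean: "integrable (pos_space N) (\<lambda>x. ?I x * ((real N - 2) / real N * ?Y x - ?Y x))"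
  proof (rule integrable_bounded_prob[OF prob_space_pos_space, where K=1])
    fix x show "\<bar>?I x * ((real N - 2) / real N * ?Y x - ?Y x)\<bar> \<le> 1"
      using abs_cond_mean_le[OF abs_lbar_nth_le[OF k, of x]] unfolding Y by (simp add: indicator_def)
  qed measurable
  have int_S: "integrable (pos_space N) (\<lambda>x. ?I x * ?S x)"
  proof (rule integrable_bounded_prob[OF prob_space_pos_space, where K="real N"])
    fix x show "\<bar>?I x * ?S x\<bar> \<le> real N"
      using abs_sum_third_node_terms_le[OF e(2,3), of x] by (simp add: indicator_def)
  qed measurable
  have "(\<integral>x. indicator B (lbar N x $ k) * dl N T cyc x k \<partial>pos_space N) =
      (\<integral>x. ?I x * ((real N - 2) / real N * ?Y x - ?Y x) - ?I x * ?S x / real N \<partial>pos_space N)"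
    unfolding Y dl using N by (intro Bochner_Integration.integral_cong) (simp_all add: field_simps)
  also have "\<dots> = (\<integral>x. ?I x * ((real N - 2) / real N * ?Y x - ?Y x) \<partial>pos_space N)"
    using int_mean int_S integral_sum_third_node_terms(1)[OF e(2,3)] by simp
  finally show "(\<integral>x. indicator B (lbar N x $ k) * dl N T cyc x k \<partial>pos_space N)
       = (\<integral>x. indicator B (lbar N x $ k) * ((real N - 2) / real N * lbar N x $ k - lbar N x $ k) \<partial>pos_space N)"
    unfolding Y .
  have "(\<integral>x. indicator B (lbar N x $ k) * (dl N T cyc x k - ((real N - 2) / real N * lbar N x $ k - lbar N x $ k))\<^sup>2 \<partial>pos_space N)
      = (\<integral>x. ?I x * (?S x)\<^sup>2 / (real N)\<^sup>2 \<partial>pos_space N)"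
    unfolding Y dl using N by (intro Bochner_Integration.integral_cong) (simp_all add: field_simps power2_eq_square)
  also have "\<dots> = (real N - 2) / (real N)\<^sup>2 * (\<integral>x. ?I x * (\<bar>?Y x\<bar> - (?Y x)\<^sup>2) \<partial>pos_space N)"
    using integral_sum_third_node_terms(2)[OF e(2,3)] by simp
  finally show "(\<integral>x. indicator B (lbar N x $ k) * (dl N T cyc x k - ((real N - 2) / real N * lbar N x $ k - lbar N x $ k))\<^sup>2 \<partial>pos_space N)
       = (\<integral>x. indicator B (lbar N x $ k) * ((real N - 2) / (real N)\<^sup>2 * (\<bar>lbar N x $ k\<bar> - (lbar N x $ k)\<^sup>2)) \<partial>pos_space N)"
    unfolding Y by (simp add: mult.left_commute)
qed

lemma AE_cond_exp_dl:
  assumes "k < n"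
  shows "AE x in pos_space N.
    real_cond_exp (pos_space N) (vimage_algebra (space (pos_space N)) (\<lambda>x. lbar N x $ k) borel)
      (\<lambda>x. dl N T cyc x k) x = (real N - 2) / real N * (lbar N x $ k) - lbar N x $ k"
proof (rule AE_real_cond_exp_vimage_eq[OF prob_space_pos_space, where K=1
      and \<phi>="\<lambda>y. (real N - 2) / real N * y - y"])
  show "(\<lambda>x. lbar N x $ k) \<in> borel_measurable (pos_space N)" "(\<lambda>x. dl N T cyc x k) \<in> borel_measurable (pos_space N)"
    using assms by (rule lbar_nth_measurable dl_measurable)+
  show "(\<lambda>y. (real N - 2) / real N * y - y) \<in> borel_measurable borel" by measurable
  fix x
  show "\<bar>dl N T cyc x k\<bar> \<le> 1" by (rule abs_dl_le[OF assms])
  show "\<bar>(real N - 2) / real N * lbar N x $ k - lbar N x $ k\<bar> \<le> 1"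
    by (rule abs_cond_mean_le[OF abs_lbar_nth_le[OF assms]])
next
  fix B :: "real set" assume "B \<in> sets borel"
  then show "(\<integral>x. indicator B (lbar N x $ k) * dl N T cyc x k \<partial>pos_space N) =
      (\<integral>x. indicator B (lbar N x $ k) * ((real N - 2) / real N * lbar N x $ k - lbar N x $ k) \<partial>pos_space N)"
    by (rule dl_moments(1)[OF assms])
qed

lemma AE_cond_var_dl:
  assumes "k < n"
  shows "AE x in pos_space N.
    cond_var (pos_space N) (vimage_algebra (space (pos_space N)) (\<lambda>x. lbar N x $ k) borel)
      (\<lambda>x. dl N T cyc x k) x = (real N - 2) / (real N)\<^sup>2 * (\<bar>lbar N x $ k\<bar> - (lbar N x $ k)\<^sup>2)"
proof (rule AE_cond_var_vimage_eq[OF prob_space_pos_space, where K=1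
      and \<phi>="\<lambda>y. (real N - 2) / real N * y - y" and \<psi>="\<lambda>y. (real N - 2) / (real N)\<^sup>2 * (\<bar>y\<bar> - y\<^sup>2)"])
  show "(\<lambda>x. lbar N x $ k) \<in> borel_measurable (pos_space N)" "(\<lambda>x. dl N T cyc x k) \<in> borel_measurable (pos_space N)"
    using assms by (rule lbar_nth_measurable dl_measurable)+
  show "(\<lambda>y. (real N - 2) / real N * y - y) \<in> borel_measurable borel"
    "(\<lambda>y. (real N - 2) / (real N)\<^sup>2 * (\<bar>y\<bar> - y\<^sup>2)) \<in> borel_measurable borel"
    by measurable
  fix x
  show "\<bar>dl N T cyc x k\<bar> \<le> 1" by (rule abs_dl_le[OF assms])
  show "\<bar>(real N - 2) / real N * lbar N x $ k - lbar N x $ k\<bar> \<le> 1"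
    by (rule abs_cond_mean_le[OF abs_lbar_nth_le[OF assms]])
  show "\<bar>(real N - 2) / (real N)\<^sup>2 * (\<bar>lbar N x $ k\<bar> - (lbar N x $ k)\<^sup>2)\<bar> \<le> 1"
    by (rule abs_cond_var_le[OF abs_lbar_nth_le[OF assms]])
next
  fix B :: "real set" assume B: "B \<in> sets borel"
  show "(\<integral>x. indicator B (lbar N x $ k) * dl N T cyc x k \<partial>pos_space N) =
      (\<integral>x. indicator B (lbar N x $ k) * ((real N - 2) / real N * lbar N x $ k - lbar N x $ k) \<partial>pos_space N)"
    "(\<integral>x. indicator B (lbar N x $ k) * (dl N T cyc x k - ((real N - 2) / real N * lbar N x $ k - lbar N x $ k))\<^sup>2 \<partial>pos_space N)
       = (\<integral>x. indicator B (lbar N x $ k) * ((real N - 2) / (real N)\<^sup>2 * (\<bar>lbar N x $ k\<bar> - (lbar N x $ k)\<^sup>2)) \<partial>pos_space N)"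
    using dl_moments[OF assms B] by simp_all
qed

lemma AE_cond_var_dl_uniform_spring:
  "AE \<omega> in pos_edge_space N.
    cond_var (pos_edge_space N) (vimage_algebra (space (pos_edge_space N)) (\<lambda>(x, i). lbar N x $ i) borel)
      (\<lambda>(x, i). dl N T cyc x i) \<omega>
    = (real N - 2) / (real N)\<^sup>2 * (\<bar>(\<lambda>(x, i). lbar N x $ i) \<omega>\<bar> - ((\<lambda>(x, i). lbar N x $ i) \<omega>)\<^sup>2)"
  unfolding pos_edge_space_def
proof (rule AE_cond_var_uniform_index_eq[OF prob_space_pos_space nE_pos, where K=1
      and \<phi>="\<lambda>y. (real N - 2) / real N * y - y" and \<psi>="\<lambda>y. (real N - 2) / (real N)\<^sup>2 * (\<bar>y\<bar> - y\<^sup>2)"])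
  show "(\<lambda>y. (real N - 2) / real N * y - y) \<in> borel_measurable borel"
    "(\<lambda>y. (real N - 2) / (real N)\<^sup>2 * (\<bar>y\<bar> - y\<^sup>2)) \<in> borel_measurable borel"
    by measurable
  fix i assume i: "i < n"
  then show "(\<lambda>x. lbar N x $ i) \<in> borel_measurable (pos_space N)" "(\<lambda>x. dl N T cyc x i) \<in> borel_measurable (pos_space N)"
    by (rule lbar_nth_measurable dl_measurable)+
  fix x
  show "\<bar>dl N T cyc x i\<bar> \<le> 1" by (rule abs_dl_le[OF i])
  show "\<bar>(real N - 2) / real N * lbar N x $ i - lbar N x $ i\<bar> \<le> 1"
    by (rule abs_cond_mean_le[OF abs_lbar_nth_le[OF i]])
  show "\<bar>(real N - 2) / (real N)\<^sup>2 * (\<bar>lbar N x $ i\<bar> - (lbar N x $ i)\<^sup>2)\<bar> \<le> 1"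
    by (rule abs_cond_var_le[OF abs_lbar_nth_le[OF i]])
next
  fix i :: nat and B :: "real set" assume i: "i < n" and B: "B \<in> sets borel"
  show "(\<integral>x. indicator B (lbar N x $ i) * dl N T cyc x i \<partial>pos_space N) =
      (\<integral>x. indicator B (lbar N x $ i) * ((real N - 2) / real N * lbar N x $ i - lbar N x $ i) \<partial>pos_space N)"
    "(\<integral>x. indicator B (lbar N x $ i) * (dl N T cyc x i - ((real N - 2) / real N * lbar N x $ i - lbar N x $ i))\<^sup>2 \<partial>pos_space N)
       = (\<integral>x. indicator B (lbar N x $ i) * ((real N - 2) / (real N)\<^sup>2 * (\<bar>lbar N x $ i\<bar> - (lbar N x $ i)\<^sup>2)) \<partial>pos_space N)"
    using dl_moments[OF i B] by simp_all
qed

end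

theorem mainTheorem6:
  fixes N :: nat and T :: "nat set" and cyc :: "nat \<Rightarrow> nat list"
  assumes "N \<ge> 3"
    and "spanning_tree N T"
    and "fundamental_cycles N T cyc"
  shows "(\<forall>k<nE N.
            (AE x in pos_space N.
               real_cond_exp (pos_space N)
                 (vimage_algebra (space (pos_space N)) (\<lambda>x. lbar N x $ k) borel)
                 (\<lambda>x. dl N T cyc x k) x
               = (real N - 2) / real N * (lbar N x $ k) - lbar N x $ k)
          \<and> (AE x in pos_space N.
               cond_var (pos_space N)
                 (vimage_algebra (space (pos_space N)) (\<lambda>x. lbar N x $ k) borel)
                 (\<lambda>x. dl N T cyc x k) x
               = (real N - 2) / (real N)\<^sup>2 * (\<bar>lbar N x $ k\<bar> - (lbar N x $ k)\<^sup>2)))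
       \<and> (AE \<omega> in pos_edge_space N.
            cond_var (pos_edge_space N)
              (vimage_algebra (space (pos_edge_space N)) (\<lambda>(x, i). lbar N x $ i) borel)
              (\<lambda>(x, i). dl N T cyc x i) \<omega>
            = (real N - 2) / (real N)\<^sup>2 *
                (\<bar>(\<lambda>(x, i). lbar N x $ i) \<omega>\<bar> - ((\<lambda>(x, i). lbar N x $ i) \<omega>)\<^sup>2))"
proof -
  interpret spring_network N T cyc
    by unfold_locales (rule assms)+
  show ?thesis
    using AE_cond_exp_dl AE_cond_var_dl AE_cond_var_dl_uniform_spring by blast
qed

end
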